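(* Consider SONATA for time-varying digraphs with step-size $\alpha\in(0,1]$ under Assumptions (A), (B'), (C), (E). Let $\epsilon_{opt}>0$ satisfy $a(\alpha):=(1-\frac\alpha2)\tilde\mu_{\min}+\frac{D^\ell_{\min}}2\alpha-\frac12\epsilon_{opt}>0$, and let $\sigma(\alpha)=1-\alpha\frac{a(\alpha)}{D_{\max}^2/\mu+a(\alpha)}$, $\eta(\alpha)=\frac{\frac{\alpha}{2\epsilon_{opt}}\frac{D_{\max}^2}\mu+\frac\alpha\mu a(\alpha)}{D_{\max}^2/\mu+a(\alpha)}$. Then for all $\nu\ge0$, $$p_\phi^{\nu+1}\le\sigma(\alpha)p_\phi^\nu+\eta(\alpha)\,\phi_{ub}\big(8L_{\max}^2\|x_{\phi,\perp}^\nu\|^2+2\|y_{\phi,\perp}^\nu\|^2\big).$$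
   Context: Problem (P): minimize $U=F+G$ over $\mathcal K$, $F=\frac1m\sum_{i=1}^mf_i$. (A): $\mathcal K\subseteq\mathbb R^d$ nonempty closed convex; $f_i$ twice differentiable convex on open $\mathcal O\supseteq\mathcal K$; $\mu I\preceq\nabla^2F\preceq LI$ on $\mathcal K$ ($\mu>0$, $L<\infty$); $G$ convex on $\mathcal K$; $U^\star$ optimal value. $\nabla^2f_i\preceq L_iI$ on $\mathcal K$, $L_{\max}=\max L_i$. (B'): digraphs $\mathcal G^\nu=(\{1,\dots,m\},\mathcal E^\nu)$; there is an integer $B>0$ with the graph with edge set $\bigcup_{t=\nu B}^{(\nu+1)B-1}\mathcal E^t$ strongly connected for all $\nu\ge0$. (E): some $c_\ell>0$ with $c^\nu_{ii}\ge c_\ell$, $c^\nu_{ij}\ge c_\ell$ if $(j,i)\in\mathcal E^\nu$ and $c^\nu_{ij}=0$ otherwise, and $\mathbf1^\top C^\nu=\mathbf1^\top$ for all $\nu$. (C): $\tilde f_i:\mathcal O\times\mathcal O\to\mathbb R$ $C^2$, $\nabla\tilde f_i(x;x)=\nabla f_i(x)$, $\nabla\tilde f_i(\cdot;x)$ $\tilde L_i$-Lipschitz, $\tilde f_i(\cdot;x)$ $\tilde\mu_i$-strongly convex on $\mathcal K$ for all $x\in\mathcal K$; constants $D_i^\ell\le D_i^u$ with $D_i^\ell I\preceq\nabla^2\tilde f_i(x;y)-\nabla^2F(x)\preceq D_i^uI$ on $\mathcal K\times\mathcal K$; $D_i=\max\{|D_i^\ell|,|D_i^u|\}$, $\tilde\mu_{\min}=\min\tilde\mu_i$,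 $D^\ell_{\min}=\min D_i^\ell$, $D_{\max}=\max D_i$. Algorithm: $x_i^0\in\mathcal K$, $y_i^0=\nabla f_i(x_i^0)$, $\phi_i^0=1$; $\hat x_i^\nu=\arg\min_{x_i\in\mathcal K}\tilde f_i(x_i;x_i^\nu)+(y_i^\nu-\nabla f_i(x_i^\nu))^\top(x_i-x_i^\nu)+G(x_i)$; $x_i^{\nu+1/2}=x_i^\nu+\alpha(\hat x_i^\nu-x_i^\nu)$; $\phi_i^{\nu+1}=\sum_jc^\nu_{ij}\phi_j^\nu$; $x_i^{\nu+1}=\frac1{\phi_i^{\nu+1}}\sum_jc^\nu_{ij}\phi_j^\nu x_j^{\nu+1/2}$; $y_i^{\nu+1}=\frac1{\phi_i^{\nu+1}}\sum_jc^\nu_{ij}(\phi_j^\nu y_j^\nu+\nabla f_j(x_j^{\nu+1})-\nabla f_j(x_j^\nu))$. Notation: $p_\phi^\nu=\sum_i\phi_i^\nu(U(x_i^\nu)-U^\star)$; $\phi_{ub}=m-c_\ell^{2(m-1)B}$; $x^\nu,y^\nu$ stack local vectors; $x_{\phi,\perp}^\nu=x^\nu-\mathbf1_m\otimes\frac1m\sum_i\phi_i^\nu x_i^\nu$, $y_{\phi,\perp}^\nu=y^\nu-\mathbf1_m\otimes\frac1m\sum_i\phi_i^\nu y_i^\nu$. *)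

theory Defs
  imports "HOL-Analysis.Analysis"
begin

definition strongly_convex_on :: "'a::real_normed_vector set \<Rightarrow> ('a \<Rightarrow> real) \<Rightarrow> real \<Rightarrow> bool" where
  "strongly_convex_on S g mu \<longleftrightarrow>
     (\<forall>x\<in>S. \<forall>y\<in>S. \<forall>t::real. 0 \<le> t \<and> t \<le> 1 \<longrightarrow>
        g ((1 - t) *\<^sub>R x + t *\<^sub>R y) \<le> (1 - t) * g x + t * g y - mu / 2 * t * (1 - t) * (norm (x - y))\<^sup>2)"

definition C2_on :: "'b::euclidean_space set \<Rightarrow> ('b \<Rightarrow> real) \<Rightarrow> bool" where
  "C2_on S g \<longleftrightarrow>
     (\<exists>(g1 :: 'b \<Rightarrow> 'b \<Rightarrow>\<^sub>L real) (g2 :: 'b \<Rightarrow> 'b \<Rightarrow>\<^sub>L ('b \<Rightarrow>\<^sub>L real)).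
        (\<forall>p\<in>S. (g has_derivative blinfun_apply (g1 p)) (at p)
              \<and> (g1 has_derivative blinfun_apply (g2 p)) (at p))
        \<and> continuous_on S g2)"

text \<open>Digraph with vertex set {..<m} and edge set Ed is strongly connected.
  An edge (j,i) is an arc from j to i.\<close>
definition strongly_connected_dg :: "nat \<Rightarrow> (nat \<times> nat) set \<Rightarrow> bool" where
  "strongly_connected_dg m Ed \<longleftrightarrow>
     (\<forall>i<m. \<forall>j<m. (i, j) \<in> (Ed \<inter> ({..<m} \<times> {..<m}))\<^sup>*)"

end

theory Submission
  imports Defs
begin

(* Each agent's half-step is a damped step towards the minimiser of a strongly convex
   surrogate of U. A second-order expansion of F minus the surrogate gives a descent
   inequality, while strong convexity of F bounds the optimality gap at the surrogate
   minimiser by the tracking error plus the step length; a weighted combination of the two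
   eliminates the step length and yields sigma and eta. Push-sum averaging is a convex
   combination, and the mixing matrices are column stochastic, so the phi-weighted merit
   can only decrease. Because the phi-weighted sum of the trackers y equals the sum of the
   local gradients, the tracking error is bounded by the consensus errors of x and y.
   Finally, strong connectivity over every window of B steps gives some agent other than j
   a weight of at least cl^(2B), whence phi_j <= m - cl^(2(m-1)B). *)

section \<open>Derivatives along segments and symmetric Hessians\<close>

lemma has_real_derivative_restrict_line:
  fixes g :: "'a::real_inner \<Rightarrow> real"
  assumes "(g has_derivative (\<lambda>h. G \<bullet> h)) (at (a + t *\<^sub>R d))"
  shows "((\<lambda>t. g (a + t *\<^sub>R d)) has_real_derivative (G \<bullet> d)) (at t)"
proof -
  have "((\<lambda>t. a + t *\<^sub>R d) has_derivative (\<lambda>h. h *\<^sub>R d)) (at t)"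
    by (auto intro!: derivative_eq_intros)
  from has_derivative_compose[OF this assms]
  have "((\<lambda>t. g (a + t *\<^sub>R d)) has_derivative (\<lambda>h. G \<bullet> (h *\<^sub>R d))) (at t)"
    by (simp add: o_def)
  moreover have "(\<lambda>h. G \<bullet> (h *\<^sub>R d)) = (*) (G \<bullet> d)"
    by (auto simp: fun_eq_iff)
  ultimately show ?thesis
    by (simp add: has_field_derivative_def)
qed

lemma has_real_derivative_restrict_line_gradient:
  fixes gr :: "'a::real_inner \<Rightarrow> 'a"
  assumes "(gr has_derivative H) (at (a + t *\<^sub>R d))"
  shows "((\<lambda>t. gr (a + t *\<^sub>R d) \<bullet> d) has_real_derivative (H d \<bullet> d)) (at t)"
proof -
  have "((\<lambda>t. a + t *\<^sub>R d) has_derivative (\<lambda>h. h *\<^sub>R d)) (at t)"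
    by (auto intro!: derivative_eq_intros)
  from has_derivative_compose[OF this assms]
  have "((\<lambda>t. gr (a + t *\<^sub>R d)) has_derivative (\<lambda>h. H (h *\<^sub>R d))) (at t)"
    by (simp add: o_def)
  from has_derivative_inner_left[OF this, of d]
  have "((\<lambda>t. gr (a + t *\<^sub>R d) \<bullet> d) has_derivative (\<lambda>h. H (h *\<^sub>R d) \<bullet> d)) (at t)" .
  moreover have "(\<lambda>h. H (h *\<^sub>R d) \<bullet> d) = (\<lambda>h. (H d \<bullet> d) * h)"
    using has_derivative_linear[OF assms] by (auto simp: linear_scale)
  ultimately show ?thesis
    by (simp add: has_field_derivative_def)
qed

lemma has_real_derivative_nonneg_at_right_min:
  fixes \<kappa> :: "real \<Rightarrow> real"
  assumes "(\<kappa> has_real_derivative l) (at 0)" and "d > 0"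
    and "\<And>t. 0 < t \<Longrightarrow> t < d \<Longrightarrow> \<kappa> 0 \<le> \<kappa> t"
  shows "0 \<le> l"
proof (rule ccontr)
  assume "\<not> 0 \<le> l"
  with DERIV_neg_dec_right[OF assms(1)] obtain d' where "d' > 0" "\<forall>h>0. h < d' \<longrightarrow> \<kappa> h < \<kappa> 0"
    by auto
  moreover have "0 < min d d' / 2" "min d d' / 2 < d" "min d d' / 2 < d'"
    using assms(2) \<open>d' > 0\<close> by auto
  ultimately have "\<kappa> (min d d' / 2) < \<kappa> 0" and "\<kappa> 0 \<le> \<kappa> (min d d' / 2)"
    using assms(3)[of "min d d' / 2"] by auto
  then show False
    by simp
qed

lemma taylor_upper_bound_segment:
  fixes g :: "'a::real_inner \<Rightarrow> real"
  assumes dg: "\<And>t. 0 \<le> t \<Longrightarrow> t \<le> 1 \<Longrightarrow> (g has_derivative (\<lambda>h. gr (a + t *\<^sub>R d) \<bullet> h)) (at (a + t *\<^sub>R d))"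
    and dgr: "\<And>t. 0 \<le> t \<Longrightarrow> t \<le> 1 \<Longrightarrow> (gr has_derivative H (a + t *\<^sub>R d)) (at (a + t *\<^sub>R d))"
    and curv: "\<And>t. 0 \<le> t \<Longrightarrow> t \<le> 1 \<Longrightarrow> H (a + t *\<^sub>R d) d \<bullet> d \<le> c"
    and s: "0 \<le> s" "s \<le> 1"
  shows "g (a + s *\<^sub>R d) \<le> g a + s * (gr a \<bullet> d) + c * s\<^sup>2 / 2"
proof -
  define q' where "q' t = gr (a + t *\<^sub>R d) \<bullet> d - gr a \<bullet> d - c * t" for t
  define q where "q t = g (a + t *\<^sub>R d) - g a - t * (gr a \<bullet> d) - c * t\<^sup>2 / 2" for t
  have "q' t \<le> q' 0" if "0 \<le> t" "t \<le> 1" for t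
  proof (rule DERIV_nonpos_imp_nonincreasing[OF that(1)])
    fix u assume "0 \<le> u" "u \<le> t"
    with that have "(q' has_real_derivative (H (a + u *\<^sub>R d) d \<bullet> d - c)) (at u)"
      unfolding q'_def using has_real_derivative_restrict_line_gradient[OF dgr]
      by (auto intro!: derivative_eq_intros)
    with curv show "\<exists>y. (q' has_real_derivative y) (at u) \<and> y \<le> 0"
      using \<open>0 \<le> u\<close> \<open>u \<le> t\<close> that by fastforce
  qed
  then have q'_nonpos: "q' t \<le> 0" if "0 \<le> t" "t \<le> 1" for t
    using that by (simp add: q'_def)
  have "q s \<le> q 0"
  proof (rule DERIV_nonpos_imp_nonincreasing[OF s(1)])
    fix u assume u: "0 \<le> u" "u \<le> s"
    with s have "(q has_real_derivative q' u) (at u)"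
      unfolding q_def q'_def using has_real_derivative_restrict_line[OF dg]
      by (auto intro!: derivative_eq_intros)
    with q'_nonpos u s show "\<exists>y. (q has_real_derivative y) (at u) \<and> y \<le> 0"
      by fastforce
  qed
  then show ?thesis
    by (simp add: q_def)
qed

lemma second_difference_mean_value:
  fixes g :: "'a::real_inner \<Rightarrow> real"
  assumes dg: "\<And>u. u \<in> S \<Longrightarrow> (g has_derivative (\<lambda>h. gr u \<bullet> h)) (at u)"
    and t: "0 < t"
    and seg: "\<And>s. 0 \<le> s \<Longrightarrow> s \<le> t \<Longrightarrow> z + s *\<^sub>R h \<in> S \<and> (z + t *\<^sub>R k) + s *\<^sub>R h \<in> S"
  obtains \<xi> where "0 < \<xi>" "\<xi> < t"
    "g (z + t *\<^sub>R h + t *\<^sub>R k) - g (z + t *\<^sub>R h) - g (z + t *\<^sub>R k) + g z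
       = t * ((gr (z + t *\<^sub>R k + \<xi> *\<^sub>R h) - gr (z + \<xi> *\<^sub>R h)) \<bullet> h)"
proof -
  define \<rho> where "\<rho> s = g ((z + t *\<^sub>R k) + s *\<^sub>R h) - g (z + s *\<^sub>R h)" for s
  define \<rho>' where "\<rho>' s = (gr (z + t *\<^sub>R k + s *\<^sub>R h) - gr (z + s *\<^sub>R h)) \<bullet> h" for s
  have "(\<rho> has_real_derivative \<rho>' s) (at s)" if "0 \<le> s" "s \<le> t" for s
    unfolding \<rho>_def \<rho>'_def inner_diff_left
    by (intro derivative_intros has_real_derivative_restrict_line dg) (use seg[OF that] in auto)
  with MVT2[of 0 t \<rho> \<rho>'] t obtain \<xi> where "0 < \<xi>" "\<xi> < t" "\<rho> t - \<rho> 0 = (t - 0) * \<rho>' \<xi>"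
    by auto
  moreover have "\<rho> t - \<rho> 0 = g (z + t *\<^sub>R h + t *\<^sub>R k) - g (z + t *\<^sub>R h) - g (z + t *\<^sub>R k) + g z"
    by (simp add: \<rho>_def algebra_simps)
  ultimately show ?thesis
    using that by (simp add: \<rho>'_def)
qed

lemma norm_scaleR_add_scaleR_le:
  assumes "0 \<le> s" "s \<le> t" "0 \<le> c" "c \<le> t"
  shows "norm (s *\<^sub>R h + c *\<^sub>R k) \<le> t * (norm h + norm k)"
proof -
  have "norm (s *\<^sub>R h + c *\<^sub>R k) \<le> s * norm h + c * norm k"
    using norm_triangle_ineq[of "s *\<^sub>R h" "c *\<^sub>R k"] assms by simp
  also have "\<dots> \<le> t * norm h + t * norm k"
    using assms by (intro add_mono mult_right_mono) auto
  finally show ?thesis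
    by (simp add: distrib_left)
qed

lemma linearized_increment_bound:
  fixes gr :: "'a::real_inner \<Rightarrow> 'a"
  assumes "linear H"
    and "norm (gr (z + u1) - gr z - H u1) \<le> c" "norm (gr (z + u2) - gr z - H u2) \<le> c"
  shows "\<bar>(gr (z + u1) - gr (z + u2)) \<bullet> h - H (u1 - u2) \<bullet> h\<bar> \<le> 2 * c * norm h"
proof -
  have "(gr (z + u1) - gr (z + u2)) \<bullet> h - H (u1 - u2) \<bullet> h
      = (gr (z + u1) - gr z - H u1) \<bullet> h - (gr (z + u2) - gr z - H u2) \<bullet> h"
    using assms(1) by (simp add: linear_diff algebra_simps)
  also have "\<bar>\<dots>\<bar> \<le> \<bar>(gr (z + u1) - gr z - H u1) \<bullet> h\<bar> + \<bar>(gr (z + u2) - gr z - H u2) \<bullet> h\<bar>"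
    by (rule abs_triangle_ineq4)
  also have "\<dots> \<le> norm (gr (z + u1) - gr z - H u1) * norm h + norm (gr (z + u2) - gr z - H u2) * norm h"
    by (intro add_mono Cauchy_Schwarz_ineq2)
  also have "\<dots> \<le> c * norm h + c * norm h"
    using assms(2,3) by (intro add_mono mult_right_mono) auto
  finally show ?thesis
    by simp
qed

lemma gradient_increment_approx:
  fixes gr :: "'a::real_inner \<Rightarrow> 'a"
  assumes dH: "(gr has_derivative H) (at z)" and e: "e > 0"
  shows "\<exists>\<delta>>0. \<forall>t s. 0 < t \<and> t < \<delta> \<and> 0 \<le> s \<and> s \<le> t \<longrightarrow>
     \<bar>(gr (z + t *\<^sub>R k + s *\<^sub>R h) - gr (z + s *\<^sub>R h)) \<bullet> h - t * (H k \<bullet> h)\<bar> \<le> e * t"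
proof -
  define N where "N = norm h + norm k + 1"
  have N: "N > 0"
    unfolding N_def using norm_ge_zero[of h] norm_ge_zero[of k] by linarith
  define e' where "e' = e / (2 * N * norm h + 1)"
  have "0 \<le> 2 * N * norm h"
    using N by simp
  then have e': "e' > 0" "e' * (2 * N * norm h) \<le> e"
    using e by (simp_all add: e'_def field_simps)
  obtain d0 where d0: "d0 > 0"
    "\<And>y. norm (y - z) < d0 \<Longrightarrow> norm (gr y - gr z - H (y - z)) \<le> e' * norm (y - z)"
    using dH e' unfolding has_derivative_at_alt by meson
  show ?thesis
  proof (intro exI[of _ "d0 / N"] conjI allI impI)
    show "d0 / N > 0"
      using d0 N by simp
    fix t s :: real assume ts: "0 < t \<and> t < d0 / N \<and> 0 \<le> s \<and> s \<le> t"
    then have tN: "t * N < d0"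
      using N by (simp add: pos_less_divide_eq)
    have near: "norm (gr (z + u) - gr z - H u) \<le> e' * (t * N)"
      if "u = s *\<^sub>R h + c *\<^sub>R k" "0 \<le> c" "c \<le> t" for u c
    proof -
      have "norm u \<le> t * (norm h + norm k)"
        unfolding that(1) using ts that(2,3) by (intro norm_scaleR_add_scaleR_le) auto
      also have "\<dots> \<le> t * N"
        using ts by (simp add: N_def)
      finally have u: "norm u \<le> t * N" .
      with tN have "norm (gr (z + u) - gr z - H u) \<le> e' * norm u"
        using d0(2)[of "z + u"] by simp
      also have "\<dots> \<le> e' * (t * N)"
        using u e' by (intro mult_left_mono) auto
      finally show ?thesis .
    qed
    have "\<bar>(gr (z + (s *\<^sub>R h + t *\<^sub>R k)) - gr (z + (s *\<^sub>R h + 0 *\<^sub>R k))) \<bullet> h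
        - H ((s *\<^sub>R h + t *\<^sub>R k) - (s *\<^sub>R h + 0 *\<^sub>R k)) \<bullet> h\<bar> \<le> 2 * (e' * (t * N)) * norm h"
      using ts by (intro linearized_increment_bound has_derivative_linear[OF dH] near) auto
    also have "\<dots> \<le> e * t"
      using mult_left_mono[OF e'(2), of t] ts by (simp add: algebra_simps)
    also have "H ((s *\<^sub>R h + t *\<^sub>R k) - (s *\<^sub>R h + 0 *\<^sub>R k)) = t *\<^sub>R H k"
      using linear_scale[OF has_derivative_linear[OF dH]] by simp
    also have "z + (s *\<^sub>R h + t *\<^sub>R k) = z + t *\<^sub>R k + s *\<^sub>R h"
      by (simp add: algebra_simps)
    finally show "\<bar>(gr (z + t *\<^sub>R k + s *\<^sub>R h) - gr (z + s *\<^sub>R h)) \<bullet> h - t * (H k \<bullet> h)\<bar> \<le> e * t"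
      by simp
  qed
qed

lemma second_difference_approx:
  fixes g :: "'a::real_inner \<Rightarrow> real"
  assumes S: "open S" "z \<in> S"
    and dg: "\<And>u. u \<in> S \<Longrightarrow> (g has_derivative (\<lambda>h. gr u \<bullet> h)) (at u)"
    and dH: "(gr has_derivative H) (at z)"
    and e: "e > 0"
  shows "\<exists>\<delta>>0. \<forall>t. 0 < t \<and> t < \<delta> \<longrightarrow>
     \<bar>g (z + t *\<^sub>R h + t *\<^sub>R k) - g (z + t *\<^sub>R h) - g (z + t *\<^sub>R k) + g z - t\<^sup>2 * (H k \<bullet> h)\<bar> \<le> e * t\<^sup>2"
proof -
  obtain \<delta> where \<delta>: "\<delta> > 0" and approx: "\<And>t s. 0 < t \<Longrightarrow> t < \<delta> \<Longrightarrow> 0 \<le> s \<Longrightarrow> s \<le> t \<Longrightarrow>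
      \<bar>(gr (z + t *\<^sub>R k + s *\<^sub>R h) - gr (z + s *\<^sub>R h)) \<bullet> h - t * (H k \<bullet> h)\<bar> \<le> e * t"
    using gradient_increment_approx[OF dH e, of k h] by blast
  obtain r where r: "r > 0" "ball z r \<subseteq> S"
    using S openE by blast
  define N where "N = norm h + norm k + 1"
  have N: "N > 0"
    unfolding N_def using norm_ge_zero[of h] norm_ge_zero[of k] by linarith
  show ?thesis
  proof (intro exI[of _ "min \<delta> (r / N)"] conjI allI impI)
    show "min \<delta> (r / N) > 0"
      using \<delta> r N by simp
    fix t :: real assume "0 < t \<and> t < min \<delta> (r / N)"
    then have t: "0 < t" "t < \<delta>" "t * N < r"
      using N by (simp_all add: pos_less_divide_eq)
    have inS: "z + (s *\<^sub>R h + c *\<^sub>R k) \<in> S" if "0 \<le> s" "s \<le> t" "0 \<le> c" "c \<le> t" for s c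
    proof -
      define u where "u = s *\<^sub>R h + c *\<^sub>R k"
      have "norm u \<le> t * (norm h + norm k)"
        unfolding u_def using that by (rule norm_scaleR_add_scaleR_le)
      also have "\<dots> \<le> t * N"
        using t by (simp add: N_def)
      finally have "dist z (z + u) < r"
        using t by (simp add: dist_norm)
      with r(2) show ?thesis
        by (auto simp: u_def)
    qed
    have "z + s *\<^sub>R h \<in> S \<and> z + t *\<^sub>R k + s *\<^sub>R h \<in> S" if "0 \<le> s" "s \<le> t" for s
      using inS[of s 0] inS[of s t] that t by (simp add: algebra_simps)
    from second_difference_mean_value[OF dg t(1) this] obtain \<xi> where \<xi>: "0 < \<xi>" "\<xi> < t"
      and mv: "g (z + t *\<^sub>R h + t *\<^sub>R k) - g (z + t *\<^sub>R h) - g (z + t *\<^sub>R k) + g z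
             = t * ((gr (z + t *\<^sub>R k + \<xi> *\<^sub>R h) - gr (z + \<xi> *\<^sub>R h)) \<bullet> h)"
      by blast
    have "g (z + t *\<^sub>R h + t *\<^sub>R k) - g (z + t *\<^sub>R h) - g (z + t *\<^sub>R k) + g z - t\<^sup>2 * (H k \<bullet> h)
        = t * ((gr (z + t *\<^sub>R k + \<xi> *\<^sub>R h) - gr (z + \<xi> *\<^sub>R h)) \<bullet> h - t * (H k \<bullet> h))"
      unfolding mv by (simp add: power2_eq_square algebra_simps)
    with mult_left_mono[OF approx[OF t(1,2)], of \<xi> t] \<xi> t(1)
    show "\<bar>g (z + t *\<^sub>R h + t *\<^sub>R k) - g (z + t *\<^sub>R h) - g (z + t *\<^sub>R k) + g z - t\<^sup>2 * (H k \<bullet> h)\<bar> \<le> e * t\<^sup>2"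
      by (simp add: abs_mult power2_eq_square)
  qed
qed

lemma hessian_symmetric:
  fixes g :: "'a::real_inner \<Rightarrow> real"
  assumes "open S" "z \<in> S"
    and "\<And>u. u \<in> S \<Longrightarrow> (g has_derivative (\<lambda>h. gr u \<bullet> h)) (at u)"
    and "(gr has_derivative H) (at z)"
  shows "H k \<bullet> h = H h \<bullet> k"
proof (rule ccontr)
  assume ne: "H k \<bullet> h \<noteq> H h \<bullet> k"
  define e where "e = \<bar>H k \<bullet> h - H h \<bullet> k\<bar> / 4"
  have e: "e > 0"
    using ne by (simp add: e_def)
  obtain d1 where d1: "d1 > 0" "\<forall>t. 0 < t \<and> t < d1 \<longrightarrow>
     \<bar>g (z + t *\<^sub>R h + t *\<^sub>R k) - g (z + t *\<^sub>R h) - g (z + t *\<^sub>R k) + g z - t\<^sup>2 * (H k \<bullet> h)\<bar> \<le> e * t\<^sup>2"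
    using second_difference_approx[OF assms e, of h k] by blast
  obtain d2 where d2: "d2 > 0" "\<forall>t. 0 < t \<and> t < d2 \<longrightarrow>
     \<bar>g (z + t *\<^sub>R k + t *\<^sub>R h) - g (z + t *\<^sub>R k) - g (z + t *\<^sub>R h) + g z - t\<^sup>2 * (H h \<bullet> k)\<bar> \<le> e * t\<^sup>2"
    using second_difference_approx[OF assms e, of k h] by blast
  define t where "t = min d1 d2 / 2"
  have t: "0 < t" "t < d1" "t < d2"
    using d1 d2 by (auto simp: t_def)
  define \<Delta> where "\<Delta> = g (z + t *\<^sub>R h + t *\<^sub>R k) - g (z + t *\<^sub>R h) - g (z + t *\<^sub>R k) + g z"
  have swap: "z + t *\<^sub>R k + t *\<^sub>R h = z + t *\<^sub>R h + t *\<^sub>R k"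
    by (simp add: algebra_simps)
  have A: "\<bar>\<Delta> - t\<^sup>2 * (H k \<bullet> h)\<bar> \<le> e * t\<^sup>2"
    using d1(2) t unfolding \<Delta>_def by blast
  have "\<Delta> = g (z + t *\<^sub>R k + t *\<^sub>R h) - g (z + t *\<^sub>R k) - g (z + t *\<^sub>R h) + g z"
    unfolding \<Delta>_def swap by linarith
  with d2(2) t have B: "\<bar>\<Delta> - t\<^sup>2 * (H h \<bullet> k)\<bar> \<le> e * t\<^sup>2"
    by simp
  have "t\<^sup>2 * (H k \<bullet> h - H h \<bullet> k) = (\<Delta> - t\<^sup>2 * (H h \<bullet> k)) - (\<Delta> - t\<^sup>2 * (H k \<bullet> h))"
    by (simp add: algebra_simps)
  then have "\<bar>t\<^sup>2 * (H k \<bullet> h - H h \<bullet> k)\<bar> \<le> \<bar>\<Delta> - t\<^sup>2 * (H h \<bullet> k)\<bar> + \<bar>\<Delta> - t\<^sup>2 * (H k \<bullet> h)\<bar>"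
    by (simp only: abs_triangle_ineq4)
  also have "\<dots> \<le> t\<^sup>2 * (2 * e)"
    using add_mono[OF B A] by (simp add: algebra_simps)
  finally have "t\<^sup>2 * \<bar>H k \<bullet> h - H h \<bullet> k\<bar> \<le> t\<^sup>2 * (2 * e)"
    by (simp only: abs_mult abs_power2)
  with t have "\<bar>H k \<bullet> h - H h \<bullet> k\<bar> \<le> 2 * e"
    by simp
  with e show False
    by (simp add: e_def)
qed

lemma symmetric_form_polarization_bound:
  fixes M :: "'a::real_inner \<Rightarrow> 'a"
  assumes "linear M" and "\<And>u v. M u \<bullet> v = M v \<bullet> u"
    and "\<And>h. \<bar>M h \<bullet> h\<bar> \<le> D * (norm h)\<^sup>2"
  shows "\<bar>M v \<bullet> w\<bar> \<le> D / 2 * ((norm v)\<^sup>2 + (norm w)\<^sup>2)"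
proof -
  have "4 * (M v \<bullet> w) = M (v + w) \<bullet> (v + w) - M (v - w) \<bullet> (v - w)"
    using assms(1) assms(2)[of v w]
    by (simp add: linear_add linear_diff algebra_simps)
  then have "4 * \<bar>M v \<bullet> w\<bar> \<le> D * (norm (v + w))\<^sup>2 + D * (norm (v - w))\<^sup>2"
    using assms(3)[of "v + w"] assms(3)[of "v - w"] by linarith
  also have "\<dots> = D * 2 * ((norm v)\<^sup>2 + (norm w)\<^sup>2)"
    by (simp add: power2_norm_eq_inner inner_commute algebra_simps)
  finally show ?thesis
    by simp
qed

lemma norm_le_of_symmetric_form_bound:
  fixes M :: "'a::real_inner \<Rightarrow> 'a"
  assumes lin: "linear M" and sym: "\<And>u v. M u \<bullet> v = M v \<bullet> u"
    and form: "\<And>h. \<bar>M h \<bullet> h\<bar> \<le> D * (norm h)\<^sup>2"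
  shows "norm (M h) \<le> D * norm h"
proof (cases "h = 0 \<or> M h = 0")
  case True
  have "0 \<le> (D * norm h) * norm h"
    using form[of h] abs_ge_zero[of "M h \<bullet> h"] by (simp add: power2_eq_square mult.assoc)
  then have "h \<noteq> 0 \<Longrightarrow> 0 \<le> D * norm h"
    by (simp add: zero_le_mult_iff)
  with True lin show ?thesis
    by (cases "h = 0") (auto simp: linear_0)
next
  case False
  define w where "w = (norm h / norm (M h)) *\<^sub>R M h"
  have "norm h * norm (M h) = M h \<bullet> w"
    using False by (simp add: w_def power2_norm_eq_inner[symmetric] power2_eq_square)
  also have "\<dots> \<le> D / 2 * ((norm h)\<^sup>2 + (norm w)\<^sup>2)"
    using symmetric_form_polarization_bound[OF lin sym form, of h w] by linarith
  also have "\<dots> = norm h * (D * norm h)"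
    using False by (simp add: w_def power2_eq_square)
  finally show ?thesis
    using False by simp
qed

lemma gradient_lipschitz_of_hessian_bound:
  fixes g :: "'a::{real_inner, perfect_space} \<Rightarrow> real"
  assumes S: "open S" "convex K" "K \<subseteq> S"
    and dg: "\<And>u. u \<in> S \<Longrightarrow> (g has_derivative (\<lambda>h. gr u \<bullet> h)) (at u)"
    and dgr: "\<And>u. u \<in> S \<Longrightarrow> (gr has_derivative H u) (at u)"
    and form: "\<And>z h. z \<in> K \<Longrightarrow> \<bar>H z h \<bullet> h\<bar> \<le> D * (norm h)\<^sup>2"
    and ab: "a \<in> K" "b \<in> K"
  shows "norm (gr b - gr a) \<le> D * norm (b - a)"
proof (rule differentiable_bound[OF S(2) _ _ ab(2,1)])
  fix z assume z: "z \<in> K"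
  with S have zS: "z \<in> S" by auto
  show "(gr has_derivative H z) (at z within K)"
    using dgr[OF zS] by (rule has_derivative_at_withinI)
  have "norm (H z h) \<le> D * norm h" for h
  proof (rule norm_le_of_symmetric_form_bound[OF has_derivative_linear[OF dgr[OF zS]]])
    show "H z u \<bullet> v = H z v \<bullet> u" for u v
      by (rule hessian_symmetric[OF S(1) zS dg dgr[OF zS]])
  qed (rule form[OF z])
  then show "onorm (H z) \<le> D"
    by (rule onorm_le)
qed

lemma convex_on_gradient_inequality:
  fixes f :: "'a::real_inner \<Rightarrow> real"
  assumes cv: "convex_on S f" and x: "x \<in> S" and y: "y \<in> S"
    and df: "(f has_derivative (\<lambda>h. G \<bullet> h)) (at x)"
  shows "f x + G \<bullet> (y - x) \<le> f y"
proof -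
  define \<kappa> where "\<kappa> t = f x + t * (f y - f x) - f (x + t *\<^sub>R (y - x))" for t
  have "(\<kappa> has_real_derivative (f y - f x) - G \<bullet> (y - x)) (at 0)"
    unfolding \<kappa>_def using has_real_derivative_restrict_line[of f G x 0 "y - x"] df
    by (auto intro!: derivative_eq_intros)
  then have "0 \<le> (f y - f x) - G \<bullet> (y - x)"
  proof (rule has_real_derivative_nonneg_at_right_min)
    fix t :: real assume t: "0 < t" "t < 1"
    have "x + t *\<^sub>R (y - x) = (1 - t) *\<^sub>R x + t *\<^sub>R y"
      by (simp add: algebra_simps)
    with convex_onD[OF cv, of t x y] t x y show "\<kappa> 0 \<le> \<kappa> t"
      by (simp add: \<kappa>_def algebra_simps)
  qed simp
  then show ?thesis
    by simp
qed

lemma convex_hessian_nonneg: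
  fixes f :: "'a::real_inner \<Rightarrow> real"
  assumes T: "open T" "z \<in> T" and cv: "convex_on T f"
    and df: "\<And>u. u \<in> T \<Longrightarrow> (f has_derivative (\<lambda>h. gr u \<bullet> h)) (at u)"
    and dH: "(gr has_derivative H) (at z)"
  shows "0 \<le> H h \<bullet> h"
proof -
  obtain r where r: "r > 0" "ball z r \<subseteq> T"
    using T openE by blast
  have "((\<lambda>t. gr (z + t *\<^sub>R h) \<bullet> h) has_real_derivative H h \<bullet> h) (at 0)"
    using has_real_derivative_restrict_line_gradient[of gr H z 0 h] dH by simp
  then show ?thesis
  proof (rule has_real_derivative_nonneg_at_right_min)
    show "r / (norm h + 1) > 0"
      using r by (simp add: add_nonneg_pos)
    fix t :: real assume t: "0 < t" "t < r / (norm h + 1)"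
    have "t * norm h \<le> t * (norm h + 1)"
      using t by simp
    also have "\<dots> < r"
      using t by (simp add: pos_less_divide_eq add_nonneg_pos)
    finally have "t * norm h < r" .
    with t r have zt: "z + t *\<^sub>R h \<in> T"
      by (auto simp: dist_norm)
    have "f z + gr z \<bullet> ((z + t *\<^sub>R h) - z) \<le> f (z + t *\<^sub>R h)"
      by (rule convex_on_gradient_inequality[OF cv T(2) zt df[OF T(2)]])
    moreover have "f (z + t *\<^sub>R h) + gr (z + t *\<^sub>R h) \<bullet> (z - (z + t *\<^sub>R h)) \<le> f z"
      by (rule convex_on_gradient_inequality[OF cv zt T(2) df[OF zt]])
    ultimately have "t * (gr z \<bullet> h) \<le> t * (gr (z + t *\<^sub>R h) \<bullet> h)"
      by (simp add: inner_diff_right)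
    with t show "gr (z + 0 *\<^sub>R h) \<bullet> h \<le> gr (z + t *\<^sub>R h) \<bullet> h"
      by simp
  qed
qed

lemma convex_on_sum_fun:
  assumes "convex A" and "\<And>i. i \<in> I \<Longrightarrow> convex_on A (f i)"
  shows "convex_on A (\<lambda>z. \<Sum>i\<in>I. f i z)"
proof (rule convex_onI[OF _ assms(1)])
  fix t :: real and x y assume t: "t > 0" "t < 1" and xy: "x \<in> A" "y \<in> A"
  have "(\<Sum>i\<in>I. f i ((1 - t) *\<^sub>R x + t *\<^sub>R y)) \<le> (\<Sum>i\<in>I. (1 - t) * f i x + t * f i y)"
    by (rule sum_mono) (use convex_onD[OF assms(2)] t xy in auto)
  then show "(\<Sum>i\<in>I. f i ((1 - t) *\<^sub>R x + t *\<^sub>R y)) \<le> (1 - t) * (\<Sum>i\<in>I. f i x) + t * (\<Sum>i\<in>I. f i y)"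
    by (simp add: sum.distrib sum_distrib_left)
qed

section \<open>Strong convexity and one surrogate step\<close>

lemma product_le_weighted_squares:
  fixes s u eps :: real
  assumes "eps > 0"
  shows "s * u \<le> eps / 2 * u\<^sup>2 + s\<^sup>2 / (2 * eps)"
proof -
  have "0 \<le> (eps * u - s)\<^sup>2 / (2 * eps)"
    using assms by simp
  also have "\<dots> = eps / 2 * u\<^sup>2 + s\<^sup>2 / (2 * eps) - s * u"
    using assms by (simp add: power2_eq_square field_simps)
  finally show ?thesis
    by simp
qed

lemma strongly_convex_on_add_affine:
  fixes K :: "'a::real_inner set"
  assumes "strongly_convex_on K f mu"
  shows "strongly_convex_on K (\<lambda>v. f v + b \<bullet> (v - c)) mu"
  unfolding strongly_convex_on_def
proof (intro ballI allI impI)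
  fix x y and t :: real assume "x \<in> K" "y \<in> K" and t: "0 \<le> t \<and> t \<le> 1"
  with assms have "f ((1 - t) *\<^sub>R x + t *\<^sub>R y) \<le> (1 - t) * f x + t * f y - mu / 2 * t * (1 - t) * (norm (x - y))\<^sup>2"
    unfolding strongly_convex_on_def by blast
  moreover have "b \<bullet> ((1 - t) *\<^sub>R x + t *\<^sub>R y - c) = (1 - t) * (b \<bullet> (x - c)) + t * (b \<bullet> (y - c))"
    by (simp add: algebra_simps)
  ultimately show "f ((1 - t) *\<^sub>R x + t *\<^sub>R y) + b \<bullet> ((1 - t) *\<^sub>R x + t *\<^sub>R y - c)
      \<le> (1 - t) * (f x + b \<bullet> (x - c)) + t * (f y + b \<bullet> (y - c)) - mu / 2 * t * (1 - t) * (norm (x - y))\<^sup>2"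
    by (simp add: algebra_simps)
qed

lemma strongly_convex_minimizer_growth:
  fixes ph G :: "'a::real_normed_vector \<Rightarrow> real"
  assumes phs: "strongly_convex_on K ph c" and Gcv: "convex_on K G"
    and xh: "xh \<in> K" and x: "x \<in> K"
    and min: "\<And>z. z \<in> K \<Longrightarrow> ph xh + G xh \<le> ph z + G z"
  shows "c / 2 * (norm (x - xh))\<^sup>2 \<le> (ph x + G x) - (ph xh + G xh)"
proof (rule field_le_mult_one_interval)
  fix s :: real assume s: "0 < s" "s < 1"
  define zt where "zt = s *\<^sub>R xh + (1 - s) *\<^sub>R x"
  have "zt \<in> K"
    using convexD[OF convex_on_imp_convex[OF Gcv] xh x, of s "1 - s"] s by (simp add: zt_def)
  then have "ph xh + G xh \<le> ph zt + G zt"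
    by (rule min)
  moreover have "ph zt \<le> s * ph xh + (1 - s) * ph x - c / 2 * (1 - s) * s * (norm (x - xh))\<^sup>2"
    using phs xh x s unfolding strongly_convex_on_def zt_def
    by (smt (verit, best) norm_minus_commute)
  moreover have "G zt \<le> s * G xh + (1 - s) * G x"
    using convex_onD[OF Gcv, of "1 - s" xh x] s xh x by (simp add: zt_def)
  ultimately have "(1 - s) * (s * (c / 2 * (norm (x - xh))\<^sup>2)) \<le> (1 - s) * ((ph x + G x) - (ph xh + G xh))"
    by (simp add: algebra_simps)
  with s show "s * (c / 2 * (norm (x - xh))\<^sup>2) \<le> (ph x + G x) - (ph xh + G xh)"
    by simp
qed

lemma minimizer_first_order_condition:
  fixes ph G :: "'a::real_inner \<Rightarrow> real"
  assumes Gcv: "convex_on K G" and xh: "xh \<in> K" and z: "z \<in> K"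
    and dph: "(ph has_derivative (\<lambda>h. gph \<bullet> h)) (at xh)"
    and min: "\<And>z. z \<in> K \<Longrightarrow> ph xh + G xh \<le> ph z + G z"
  shows "G xh - gph \<bullet> (z - xh) \<le> G z"
proof -
  define \<kappa> where "\<kappa> t = ph (xh + t *\<^sub>R (z - xh)) + t * (G z - G xh)" for t
  have "(\<kappa> has_real_derivative gph \<bullet> (z - xh) + (G z - G xh)) (at 0)"
    unfolding \<kappa>_def using has_real_derivative_restrict_line[of ph gph xh 0 "z - xh"] dph
    by (auto intro!: derivative_eq_intros)
  then have "0 \<le> gph \<bullet> (z - xh) + (G z - G xh)"
  proof (rule has_real_derivative_nonneg_at_right_min)
    fix t :: real assume t: "0 < t" "t < 1"
    have zt: "xh + t *\<^sub>R (z - xh) = (1 - t) *\<^sub>R xh + t *\<^sub>R z"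
      by (simp add: algebra_simps)
    have "G (xh + t *\<^sub>R (z - xh)) \<le> (1 - t) * G xh + t * G z"
      using convex_onD[OF Gcv, of t xh z] t xh z by (simp add: zt)
    moreover have "ph xh + G xh \<le> ph (xh + t *\<^sub>R (z - xh)) + G (xh + t *\<^sub>R (z - xh))"
      using convexD[OF convex_on_imp_convex[OF Gcv] xh z, of "1 - t" t] t by (intro min) (simp add: zt)
    ultimately show "\<kappa> 0 \<le> \<kappa> t"
      by (simp add: \<kappa>_def algebra_simps)
  qed simp
  then show ?thesis
    by simp
qed

lemma hessian_lower_bound_gradient_inequality:
  fixes F :: "'a::real_inner \<Rightarrow> real"
  assumes K: "convex K" "K \<subseteq> S"
    and dF: "\<And>u. u \<in> S \<Longrightarrow> (F has_derivative (\<lambda>h. gF u \<bullet> h)) (at u)"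
    and dgF: "\<And>u. u \<in> S \<Longrightarrow> (gF has_derivative HF u) (at u)"
    and curv: "\<And>z h. z \<in> K \<Longrightarrow> mu * (norm h)\<^sup>2 \<le> HF z h \<bullet> h"
    and x: "x \<in> K" and z: "z \<in> K"
  shows "F x + gF x \<bullet> (z - x) + mu / 2 * (norm (z - x))\<^sup>2 \<le> F z"
proof -
  have seg: "x + t *\<^sub>R (z - x) \<in> K" if "0 \<le> t" "t \<le> 1" for t
    using convexD[OF K(1) x z, of "1 - t" t] that by (simp add: algebra_simps)
  have "- F (x + 1 *\<^sub>R (z - x)) \<le> - F x + 1 * (- gF x \<bullet> (z - x)) + (- mu * (norm (z - x))\<^sup>2) * 1\<^sup>2 / 2"
  proof (rule taylor_upper_bound_segment[where g = "\<lambda>v. - F v" and gr = "\<lambda>v. - gF v" and H = "\<lambda>v h. - HF v h"])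
    fix t :: real assume "0 \<le> t" "t \<le> 1"
    with seg K(2) have p: "x + t *\<^sub>R (z - x) \<in> K" "x + t *\<^sub>R (z - x) \<in> S"
      by auto
    show "((\<lambda>v. - F v) has_derivative (\<lambda>h. - gF (x + t *\<^sub>R (z - x)) \<bullet> h)) (at (x + t *\<^sub>R (z - x)))"
      using has_derivative_minus[OF dF[OF p(2)]] by simp
    show "((\<lambda>v. - gF v) has_derivative (\<lambda>h. - HF (x + t *\<^sub>R (z - x)) h)) (at (x + t *\<^sub>R (z - x)))"
      using has_derivative_minus[OF dgF[OF p(2)]] by simp
    show "- HF (x + t *\<^sub>R (z - x)) (z - x) \<bullet> (z - x) \<le> - mu * (norm (z - x))\<^sup>2"
      using curv[OF p(1), of "z - x"] by simp
  qed auto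
  then show ?thesis
    by simp
qed

lemma optimality_gap_le:
  fixes U :: "'a::real_inner \<Rightarrow> real"
  assumes mu: "mu > 0" and x: "x \<in> K"
    and lower: "\<And>z. z \<in> K \<Longrightarrow> U x + v \<bullet> (z - x) + mu / 2 * (norm (z - x))\<^sup>2 \<le> U z"
  shows "U x - Inf (U ` K) \<le> (norm v)\<^sup>2 / (2 * mu)"
proof -
  have "U x - (norm v)\<^sup>2 / (2 * mu) \<le> U z" if z: "z \<in> K" for z
  proof -
    have "- (v \<bullet> (z - x)) \<le> norm v * norm (z - x)"
      using Cauchy_Schwarz_ineq2[of v "z - x"] by linarith
    also have "\<dots> \<le> mu / 2 * (norm (z - x))\<^sup>2 + (norm v)\<^sup>2 / (2 * mu)"
      by (rule product_le_weighted_squares[OF mu])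
    finally show ?thesis
      using lower[OF z] by linarith
  qed
  then have "U x - (norm v)\<^sup>2 / (2 * mu) \<le> Inf (U ` K)"
    using x by (intro cInf_greatest) auto
  then show ?thesis
    by simp
qed

(* Adding the two estimates with weights P and a cancels the unknown squared step length u. *)

lemma combine_descent_and_gap:
  fixes L \<Delta> E u P a alpha eps mu :: real
  assumes P: "P \<ge> 0" and a: "a > 0" and mu: "mu > 0" and eps: "eps > 0"
    and descent: "L \<le> \<Delta> - alpha * a * u\<^sup>2 + alpha * E / (2 * eps)"
    and gap: "L \<le> (1 - alpha) * \<Delta> + alpha * (P * u\<^sup>2 + E / mu)"
  shows "L \<le> (1 - alpha * (a / (P + a))) * \<Delta> + ((alpha / (2 * eps) * P + alpha / mu * a) / (P + a)) * E"
proof -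
  have Pa: "P + a > 0"
    using P a by simp
  have "(P + a) * L \<le> P * (\<Delta> - alpha * a * u\<^sup>2 + alpha * E / (2 * eps)) + a * ((1 - alpha) * \<Delta> + alpha * (P * u\<^sup>2 + E / mu))"
    using mult_left_mono[OF descent P] mult_left_mono[OF gap less_imp_le[OF a]] by (simp add: distrib_right)
  also have "\<dots> = (P + a) * \<Delta> - alpha * a * \<Delta> + (alpha / (2 * eps) * P + alpha / mu * a) * E"
    by (simp add: algebra_simps)
  also have "\<dots> = (P + a) * ((1 - alpha * (a / (P + a))) * \<Delta> + ((alpha / (2 * eps) * P + alpha / mu * a) / (P + a)) * E)"
  proof -
    have "(P + a) * ((1 - alpha * (a / (P + a))) * \<Delta>) = (P + a) * \<Delta> - alpha * a * \<Delta>"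
      using Pa by (simp add: field_simps)
    moreover have "(P + a) * (((alpha / (2 * eps) * P + alpha / mu * a) / (P + a)) * E) = (alpha / (2 * eps) * P + alpha / mu * a) * E"
      using Pa by simp
    ultimately show ?thesis
      by (simp add: distrib_left)
  qed
  finally show ?thesis
    using Pa by (simp add: mult_le_cancel_left_pos)
qed

locale surrogate_step =
  fixes K Oo :: "'a::{real_inner, perfect_space} set"
    and F G ph :: "'a \<Rightarrow> real" and gF gph :: "'a \<Rightarrow> 'a" and HF Hph :: "'a \<Rightarrow> 'a \<Rightarrow> 'a"
    and mu mut Dl Dm :: real and x xh y :: 'a
  assumes Oo_open: "open Oo" and K_convex: "convex K" and K_sub: "K \<subseteq> Oo"
    and x_in: "x \<in> K" and xh_in: "xh \<in> K"
    and F_grad: "\<And>u. u \<in> Oo \<Longrightarrow> (F has_derivative (\<lambda>h. gF u \<bullet> h)) (at u)"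
    and F_hess: "\<And>u. u \<in> Oo \<Longrightarrow> (gF has_derivative HF u) (at u)"
    and ph_grad: "\<And>u. u \<in> Oo \<Longrightarrow> (ph has_derivative (\<lambda>h. gph u \<bullet> h)) (at u)"
    and ph_hess: "\<And>u. u \<in> Oo \<Longrightarrow> (gph has_derivative Hph u) (at u)"
    and F_convex: "convex_on K F" and G_convex: "convex_on K G"
    and mu_pos: "mu > 0"
    and F_curv: "\<And>z h. z \<in> K \<Longrightarrow> mu * (norm h)\<^sup>2 \<le> HF z h \<bullet> h"
    and D_lower: "\<And>z h. z \<in> K \<Longrightarrow> Dl * (norm h)\<^sup>2 \<le> (Hph z h - HF z h) \<bullet> h"
    and D_abs: "\<And>z h. z \<in> K \<Longrightarrow> \<bar>(Hph z h - HF z h) \<bullet> h\<bar> \<le> Dm * (norm h)\<^sup>2"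
    and ph_strongly_convex: "strongly_convex_on K ph mut"
    and xh_min: "\<And>z. z \<in> K \<Longrightarrow> ph xh + G xh \<le> ph z + G z"
    and gph_x: "gph x = y"
begin

lemma segment_in_K: "p \<in> K \<Longrightarrow> q \<in> K \<Longrightarrow> 0 \<le> t \<Longrightarrow> t \<le> 1 \<Longrightarrow> p + t *\<^sub>R (q - p) \<in> K"
  using convexD[OF K_convex, of p q "1 - t" t] by (simp add: algebra_simps)

lemma F_minus_ph_upper:
  assumes s: "0 \<le> s" "s \<le> 1"
  shows "F (x + s *\<^sub>R (xh - x)) - ph (x + s *\<^sub>R (xh - x))
    \<le> F x - ph x + s * ((gF x - gph x) \<bullet> (xh - x)) + (- Dl * (norm (xh - x))\<^sup>2) * s\<^sup>2 / 2"
proof -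
  define d where "d = xh - x"
  have "(\<lambda>v. F v - ph v) (x + s *\<^sub>R d)
      \<le> (\<lambda>v. F v - ph v) x + s * ((\<lambda>v. gF v - gph v) x \<bullet> d) + (- Dl * (norm d)\<^sup>2) * s\<^sup>2 / 2"
  proof (rule taylor_upper_bound_segment[where H = "\<lambda>v h. HF v h - Hph v h"])
    fix t :: real assume "0 \<le> t" "t \<le> 1"
    with segment_in_K[OF x_in xh_in] K_sub have p: "x + t *\<^sub>R d \<in> K" "x + t *\<^sub>R d \<in> Oo"
      by (auto simp: d_def)
    show "((\<lambda>v. F v - ph v) has_derivative (\<lambda>h. (gF (x + t *\<^sub>R d) - gph (x + t *\<^sub>R d)) \<bullet> h)) (at (x + t *\<^sub>R d))"
      using has_derivative_diff[OF F_grad[OF p(2)] ph_grad[OF p(2)]] by (simp add: inner_diff_left)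
    show "((\<lambda>v. gF v - gph v) has_derivative (\<lambda>h. HF (x + t *\<^sub>R d) h - Hph (x + t *\<^sub>R d) h)) (at (x + t *\<^sub>R d))"
      using has_derivative_diff[OF F_hess[OF p(2)] ph_hess[OF p(2)]] by simp
    show "(HF (x + t *\<^sub>R d) d - Hph (x + t *\<^sub>R d) d) \<bullet> d \<le> - Dl * (norm d)\<^sup>2"
      using D_lower[OF p(1), of d] by (simp add: inner_diff_left)
  qed (use s in auto)
  then show ?thesis
    by (simp add: d_def)
qed

lemma descent:
  assumes alpha: "0 < alpha" "alpha \<le> 1"
  shows "F (x + alpha *\<^sub>R (xh - x)) + G (x + alpha *\<^sub>R (xh - x))
    \<le> F x + G x + alpha * ((gF x - y) \<bullet> (xh - x))
       - alpha * ((1 - alpha / 2) * mut + Dl / 2 * alpha) * (norm (xh - x))\<^sup>2"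
proof -
  define d where "d = xh - x"
  define xa where "xa = x + alpha *\<^sub>R d"
  have xa: "xa = (1 - alpha) *\<^sub>R x + alpha *\<^sub>R xh"
    by (simp add: xa_def d_def algebra_simps)
  have "ph xa \<le> (1 - alpha) * ph x + alpha * ph xh - mut / 2 * alpha * (1 - alpha) * (norm d)\<^sup>2"
    using ph_strongly_convex x_in xh_in alpha unfolding strongly_convex_on_def xa
    by (auto simp: d_def norm_minus_commute)
  moreover have "G xa \<le> (1 - alpha) * G x + alpha * G xh"
    unfolding xa using convex_onD[OF G_convex, of alpha x xh] alpha x_in xh_in by simp
  ultimately have "F xa + G xa \<le> F x + G x - alpha * ((ph x + G x) - (ph xh + G xh))
      + alpha * ((gF x - y) \<bullet> d) - (Dl * alpha\<^sup>2 / 2 + mut / 2 * alpha * (1 - alpha)) * (norm d)\<^sup>2"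
    using F_minus_ph_upper[of alpha] alpha gph_x by (simp add: xa_def d_def algebra_simps power2_eq_square)
  moreover have "alpha * (mut / 2 * (norm d)\<^sup>2) \<le> alpha * ((ph x + G x) - (ph xh + G xh))"
    using strongly_convex_minimizer_growth[OF ph_strongly_convex G_convex xh_in x_in xh_min] alpha
    by (simp add: d_def norm_minus_commute)
  moreover have "alpha * ((1 - alpha / 2) * mut + Dl / 2 * alpha) * (norm d)\<^sup>2
      = alpha * (mut / 2 * (norm d)\<^sup>2) + (Dl * alpha\<^sup>2 / 2 + mut / 2 * alpha * (1 - alpha)) * (norm d)\<^sup>2"
    by (simp add: field_simps power2_eq_square)
  ultimately show ?thesis
    unfolding xa_def d_def by linarith
qed

lemma optimality_gap:
  "F xh + G xh - Inf ((\<lambda>z. F z + G z) ` K) \<le> (norm (gF xh - gph xh))\<^sup>2 / (2 * mu)"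
proof (rule optimality_gap_le[OF mu_pos xh_in])
  fix z assume z: "z \<in> K"
  show "F xh + G xh + (gF xh - gph xh) \<bullet> (z - xh) + mu / 2 * (norm (z - xh))\<^sup>2 \<le> F z + G z"
    using hessian_lower_bound_gradient_inequality[OF K_convex K_sub F_grad F_hess F_curv xh_in z]
      minimizer_first_order_condition[OF G_convex xh_in z ph_grad xh_min] xh_in K_sub
    by (auto simp: inner_diff_left)
qed

lemma gradient_residual:
  "norm (gF xh - gph xh) \<le> norm (gF x - y) + Dm * norm (xh - x)"
proof -
  have "norm ((gF xh - gph xh) - (gF x - gph x)) \<le> Dm * norm (xh - x)"
  proof (rule gradient_lipschitz_of_hessian_bound[OF Oo_open K_convex K_sub _ _ _ x_in xh_in])
    show "((\<lambda>v. F v - ph v) has_derivative (\<lambda>h. (gF u - gph u) \<bullet> h)) (at u)" if "u \<in> Oo" for u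
      using has_derivative_diff[OF F_grad[OF that] ph_grad[OF that]] by (simp add: inner_diff_left)
    show "((\<lambda>v. gF v - gph v) has_derivative (\<lambda>h. HF u h - Hph u h)) (at u)" if "u \<in> Oo" for u
      using has_derivative_diff[OF F_hess[OF that] ph_hess[OF that]] by simp
    show "\<bar>(HF z h - Hph z h) \<bullet> h\<bar> \<le> Dm * (norm h)\<^sup>2" if "z \<in> K" for z h
      using D_abs[OF that, of h] by (simp add: inner_diff_left)
  qed
  moreover have "gF xh - gph xh = (gF x - y) + ((gF xh - gph xh) - (gF x - gph x))"
    by (simp add: gph_x)
  ultimately show ?thesis
    by (metis add_left_mono norm_triangle_ineq order_trans)
qed

lemma descent_estimate:
  assumes alpha: "0 < alpha" "alpha \<le> 1" and eps: "eps > 0"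
    and coef: "a + eps / 2 \<le> (1 - alpha / 2) * mut + Dl / 2 * alpha"
  shows "F (x + alpha *\<^sub>R (xh - x)) + G (x + alpha *\<^sub>R (xh - x))
    \<le> F x + G x - alpha * a * (norm (xh - x))\<^sup>2 + alpha * (norm (gF x - y))\<^sup>2 / (2 * eps)"
proof -
  define s where "s = norm (gF x - y)"
  define u where "u = norm (xh - x)"
  have "(gF x - y) \<bullet> (xh - x) \<le> s * u"
    unfolding s_def u_def using Cauchy_Schwarz_ineq2 abs_le_iff by blast
  also have "\<dots> \<le> eps / 2 * u\<^sup>2 + s\<^sup>2 / (2 * eps)"
    by (rule product_le_weighted_squares[OF eps])
  finally have "alpha * ((gF x - y) \<bullet> (xh - x)) \<le> alpha * (eps / 2 * u\<^sup>2 + s\<^sup>2 / (2 * eps))"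
    using alpha by simp
  moreover have "alpha * (a + eps / 2) * u\<^sup>2 \<le> alpha * ((1 - alpha / 2) * mut + Dl / 2 * alpha) * u\<^sup>2"
    using coef alpha by (intro mult_right_mono mult_left_mono) auto
  ultimately show ?thesis
    using descent[OF alpha] unfolding s_def u_def by (simp add: algebra_simps)
qed

lemma gap_estimate:
  assumes alpha: "0 < alpha" "alpha \<le> 1"
  defines "Ust \<equiv> Inf ((\<lambda>z. F z + G z) ` K)"
  shows "F (x + alpha *\<^sub>R (xh - x)) + G (x + alpha *\<^sub>R (xh - x)) - Ust
    \<le> (1 - alpha) * (F x + G x - Ust) + alpha * (Dm\<^sup>2 / mu * (norm (xh - x))\<^sup>2 + (norm (gF x - y))\<^sup>2 / mu)"
proof -
  define s where "s = norm (gF x - y)"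
  define u where "u = norm (xh - x)"
  have "(norm (gF xh - gph xh))\<^sup>2 \<le> (s + Dm * u)\<^sup>2"
    using gradient_residual unfolding s_def u_def by (intro power_mono) auto
  also have "\<dots> \<le> 2 * s\<^sup>2 + 2 * (Dm\<^sup>2 * u\<^sup>2)"
    using sum_squares_bound[of s "Dm * u"] by (simp add: power2_eq_square algebra_simps)
  finally have "(norm (gF xh - gph xh))\<^sup>2 / (2 * mu) \<le> (2 * s\<^sup>2 + 2 * (Dm\<^sup>2 * u\<^sup>2)) / (2 * mu)"
    using mu_pos by (intro divide_right_mono) auto
  also have "\<dots> = Dm\<^sup>2 / mu * u\<^sup>2 + s\<^sup>2 / mu"
    using mu_pos by (simp add: field_simps)
  finally have "alpha * (F xh + G xh - Ust) \<le> alpha * (Dm\<^sup>2 / mu * u\<^sup>2 + s\<^sup>2 / mu)"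
    using optimality_gap alpha unfolding Ust_def by (intro mult_left_mono) auto
  moreover have "F (x + alpha *\<^sub>R (xh - x)) + G (x + alpha *\<^sub>R (xh - x)) \<le> (1 - alpha) * (F x + G x) + alpha * (F xh + G xh)"
    using convex_onD[OF convex_on_add[OF F_convex G_convex], of alpha x xh] alpha x_in xh_in
    by (simp add: algebra_simps)
  moreover have "(1 - alpha) * (F x + G x) + alpha * (F xh + G xh) - Ust
      = (1 - alpha) * (F x + G x - Ust) + alpha * (F xh + G xh - Ust)"
    by (simp add: algebra_simps)
  ultimately show ?thesis
    unfolding s_def u_def by linarith
qed

lemma contraction:
  assumes "0 < alpha" "alpha \<le> 1" and "eps > 0" and "a > 0"
    and "a + eps / 2 \<le> (1 - alpha / 2) * mut + Dl / 2 * alpha"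
  defines "Ust \<equiv> Inf ((\<lambda>z. F z + G z) ` K)"
  shows "F (x + alpha *\<^sub>R (xh - x)) + G (x + alpha *\<^sub>R (xh - x)) - Ust
    \<le> (1 - alpha * (a / (Dm\<^sup>2 / mu + a))) * (F x + G x - Ust)
       + ((alpha / (2 * eps) * (Dm\<^sup>2 / mu) + alpha / mu * a) / (Dm\<^sup>2 / mu + a)) * (norm (gF x - y))\<^sup>2"
  using descent_estimate[OF assms(1-3,5)] gap_estimate[OF assms(1,2)] mu_pos assms(3,4)
  unfolding Ust_def by (intro combine_descent_and_gap) (auto simp: algebra_simps)

end

section \<open>Push-sum weights\<close>

lemma rtrancl_exists_step_away:
  assumes "(a, b) \<in> R\<^sup>*" "b \<noteq> a"
  shows "\<exists>c. (a, c) \<in> R \<and> c \<noteq> a"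
  using assms by (induction rule: converse_rtrancl_induct) blast+

lemma exists_window_before:
  fixes B \<nu> :: nat
  assumes "0 < B" "B \<le> \<nu>"
  obtains w where "(w + 1) * B \<le> \<nu>" "\<nu> - w * B \<le> 2 * B"
proof
  define q where "q = \<nu> div B"
  have "0 < q"
    using assms by (simp add: q_def div_greater_zero_iff)
  then have qB: "(q - 1 + 1) * B = q * B"
    by simp
  have "q * B \<le> \<nu>" "\<nu> < q * B + B"
    using div_mult_mod_eq[of \<nu> B] mod_less_divisor[OF assms(1), of \<nu>] unfolding q_def by linarith+
  with qB show "(q - 1 + 1) * B \<le> \<nu>" "\<nu> - (q - 1) * B \<le> 2 * B"
    by (simp_all add: algebra_simps)
qed

locale push_sum_weights =
  fixes m :: nat and E :: "nat \<Rightarrow> (nat \<times> nat) set" and B :: nat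
    and C :: "nat \<Rightarrow> nat \<Rightarrow> nat \<Rightarrow> real" and cl :: real and phi :: "nat \<Rightarrow> nat \<Rightarrow> real"
  assumes m_pos: "m > 0" and B_pos: "B > 0"
    and B_conn: "\<And>\<nu>. strongly_connected_dg m (\<Union>t\<in>{\<nu> * B ..< (\<nu> + 1) * B}. E t)"
    and cl_pos: "cl > 0"
    and C_diag: "\<And>\<nu> i. i < m \<Longrightarrow> C \<nu> i i \<ge> cl"
    and C_edge: "\<And>\<nu> i j. i < m \<Longrightarrow> j < m \<Longrightarrow> (j, i) \<in> E \<nu> \<Longrightarrow> C \<nu> i j \<ge> cl"
    and C_zero: "\<And>\<nu> i j. i < m \<Longrightarrow> j < m \<Longrightarrow> i \<noteq> j \<Longrightarrow> (j, i) \<notin> E \<nu> \<Longrightarrow> C \<nu> i j = 0"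
    and C_colstoch: "\<And>\<nu> j. j < m \<Longrightarrow> (\<Sum>i<m. C \<nu> i j) = 1"
    and phi_0: "\<And>i. i < m \<Longrightarrow> phi 0 i = 1"
    and phi_Suc: "\<And>\<nu> i. i < m \<Longrightarrow> phi (Suc \<nu>) i = (\<Sum>j<m. C \<nu> i j * phi \<nu> j)"
begin

lemma C_nonneg:
  assumes "i < m" "j < m"
  shows "C \<nu> i j \<ge> 0"
proof (cases "i = j \<or> (j, i) \<in> E \<nu>")
  case True
  with assms C_diag C_edge have "cl \<le> C \<nu> i j"
    by auto
  with cl_pos show ?thesis
    by simp
qed (use assms C_zero in auto)

lemma cl_le_one: "cl \<le> 1"
proof -
  have "C 0 0 0 \<le> (\<Sum>i<m. C 0 i 0)"
    by (rule member_le_sum) (use m_pos C_nonneg in auto)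
  then show ?thesis
    using C_colstoch[OF m_pos, of 0] C_diag[OF m_pos, of 0] by simp
qed

lemma column_stochastic_sum:
  fixes v :: "nat \<Rightarrow> 'a::real_vector"
  shows "(\<Sum>i<m. \<Sum>j<m. C \<nu> i j *\<^sub>R v j) = (\<Sum>j<m. v j)"
proof -
  have "(\<Sum>i<m. \<Sum>j<m. C \<nu> i j *\<^sub>R v j) = (\<Sum>j<m. \<Sum>i<m. C \<nu> i j *\<^sub>R v j)"
    by (rule sum.swap)
  also have "\<dots> = (\<Sum>j<m. (\<Sum>i<m. C \<nu> i j) *\<^sub>R v j)"
    by (simp add: scaleR_sum_left)
  also have "\<dots> = (\<Sum>j<m. v j)"
    by (simp add: C_colstoch)
  finally show ?thesis .
qed

lemma phi_pos: "i < m \<Longrightarrow> phi \<nu> i > 0"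
proof (induction \<nu> arbitrary: i)
  case 0
  then show ?case
    by (simp add: phi_0)
next
  case (Suc \<nu>)
  have "C \<nu> i i * phi \<nu> i \<le> (\<Sum>j<m. C \<nu> i j * phi \<nu> j)"
    by (rule member_le_sum) (use Suc C_nonneg in \<open>auto intro!: mult_nonneg_nonneg less_imp_le[OF Suc.IH]\<close>)
  moreover have "C \<nu> i i * phi \<nu> i > 0"
    using C_diag[OF Suc.prems, of \<nu>] cl_pos Suc by simp
  ultimately show ?case
    using phi_Suc[OF Suc.prems] by simp
qed

lemma phi_sum: "(\<Sum>i<m. phi \<nu> i) = real m"
proof (induction \<nu>)
  case 0
  then show ?case
    by (simp add: phi_0)
next
  case (Suc \<nu>)
  then show ?case
    using column_stochastic_sum[of \<nu> "phi \<nu>"] by (simp add: phi_Suc)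
qed

lemma exists_phi_ge_one: "\<exists>k<m. 1 \<le> phi \<nu> k"
proof (rule ccontr)
  assume "\<not> (\<exists>k<m. 1 \<le> phi \<nu> k)"
  then have "(\<Sum>i<m. phi \<nu> i) < (\<Sum>i<m. 1)"
    using m_pos by (intro sum_strict_mono) (auto simp: not_le)
  then show False
    using phi_sum[of \<nu>] by simp
qed

lemma phi_Suc_ge:
  assumes "i < m" "k < m" "k = i \<or> (k, i) \<in> E \<nu>"
  shows "cl * phi \<nu> k \<le> phi (Suc \<nu>) i"
proof -
  have "cl * phi \<nu> k \<le> C \<nu> i k * phi \<nu> k"
    using assms C_diag C_edge phi_pos[of k \<nu>] by (intro mult_right_mono) auto
  also have "\<dots> \<le> (\<Sum>j<m. C \<nu> i j * phi \<nu> j)"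
    by (rule member_le_sum) (use assms C_nonneg in \<open>auto intro!: mult_nonneg_nonneg less_imp_le[OF phi_pos]\<close>)
  finally show ?thesis
    using phi_Suc[OF assms(1)] by simp
qed

lemma phi_ge_pow:
  assumes "i < m" "\<nu> \<le> \<nu>'"
  shows "cl ^ (\<nu>' - \<nu>) * phi \<nu> i \<le> phi \<nu>' i"
  using assms(2)
proof (induction \<nu>' rule: dec_induct)
  case (step n)
  have "cl ^ (Suc n - \<nu>) * phi \<nu> i = cl * (cl ^ (n - \<nu>) * phi \<nu> i)"
    using step.hyps by (simp add: Suc_diff_le)
  also have "\<dots> \<le> cl * phi n i"
    using step.IH cl_pos by simp
  also have "\<dots> \<le> phi (Suc n) i"
    using phi_Suc_ge[OF assms(1) assms(1)] by simp
  finally show ?case .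
qed simp

lemma pow_ge_pow_2B: "k \<le> 2 * B \<Longrightarrow> cl ^ (2 * B) \<le> cl ^ k"
  using power_decreasing[of k "2 * B" cl] cl_pos cl_le_one by simp

(* The union graph of the window is strongly connected, so some out-neighbour of j
   receives a fixed fraction of the weight of j. *)

lemma window_neighbor_phi_ge:
  assumes m2: "m \<ge> 2" and j: "j < m" and window: "(w + 1) * B \<le> \<nu>"
  shows "\<exists>i<m. i \<noteq> j \<and> cl ^ (\<nu> - w * B) * phi (w * B) j \<le> phi \<nu> i"
proof -
  define i0 where "i0 = (if j = 0 then 1 else 0 :: nat)"
  have i0: "i0 < m" "i0 \<noteq> j"
    using m2 by (auto simp: i0_def)
  have "(j, i0) \<in> ((\<Union>t\<in>{w * B ..< (w + 1) * B}. E t) \<inter> ({..<m} \<times> {..<m}))\<^sup>*"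
    using B_conn[of w] j i0(1) unfolding strongly_connected_dg_def by blast
  from rtrancl_exists_step_away[OF this i0(2)] obtain i t where
    i: "i < m" "i \<noteq> j" and t: "w * B \<le> t" "t < (w + 1) * B" and edge: "(j, i) \<in> E t"
    by auto
  have "\<nu> - w * B = (\<nu> - Suc t) + Suc (t - w * B)"
    using t window by simp
  then have "cl ^ (\<nu> - w * B) = cl ^ (\<nu> - Suc t) * (cl * cl ^ (t - w * B))"
    by (simp only: power_add power_Suc)
  then have "cl ^ (\<nu> - w * B) * phi (w * B) j = cl ^ (\<nu> - Suc t) * (cl * (cl ^ (t - w * B) * phi (w * B) j))"
    by (simp add: mult.assoc)
  also have "\<dots> \<le> cl ^ (\<nu> - Suc t) * (cl * phi t j)"
    using phi_ge_pow[OF j t(1)] cl_pos by (intro mult_left_mono) auto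
  also have "\<dots> \<le> cl ^ (\<nu> - Suc t) * phi (Suc t) i"
    using phi_Suc_ge[OF i(1) j] edge cl_pos by (intro mult_left_mono) auto
  also have "\<dots> \<le> phi \<nu> i"
    using phi_ge_pow[OF i(1)] t window by simp
  finally show ?thesis
    using i by blast
qed

lemma exists_other_phi_ge:
  assumes m2: "m \<ge> 2" and j: "j < m"
  shows "\<exists>i<m. i \<noteq> j \<and> cl ^ (2 * B) \<le> phi \<nu> i"
proof (cases "\<nu> < B")
  case True
  define i where "i = (if j = 0 then 1 else 0 :: nat)"
  have i: "i < m" "i \<noteq> j"
    using m2 by (auto simp: i_def)
  have "cl ^ (2 * B) \<le> cl ^ (\<nu> - 0) * phi 0 i"
    using pow_ge_pow_2B[of \<nu>] True phi_0[OF i(1)] by simp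
  also have "\<dots> \<le> phi \<nu> i"
    by (rule phi_ge_pow[OF i(1)]) simp
  finally show ?thesis
    using i by blast
next
  case False
  with B_pos obtain w where window: "(w + 1) * B \<le> \<nu>" and gap: "\<nu> - w * B \<le> 2 * B"
    using exists_window_before by (metis not_le)
  obtain k where k: "k < m" "1 \<le> phi (w * B) k"
    using exists_phi_ge_one by blast
  have "cl ^ (\<nu> - w * B) * 1 \<le> cl ^ (\<nu> - w * B) * phi (w * B) k"
    using k(2) cl_pos by (intro mult_left_mono) auto
  then have k_weight: "cl ^ (2 * B) \<le> cl ^ (\<nu> - w * B) * phi (w * B) k"
    using pow_ge_pow_2B[OF gap] by simp
  have "\<exists>i<m. i \<noteq> j \<and> cl ^ (\<nu> - w * B) * phi (w * B) k \<le> phi \<nu> i"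
  proof (cases "k = j")
    case True
    then show ?thesis
      using window_neighbor_phi_ge[OF m2 j window] by simp
  next
    case False
    then show ?thesis
      using phi_ge_pow[OF k(1)] window k(1) by auto
  qed
  with k_weight show ?thesis
    by force
qed

lemma phi_le:
  assumes m2: "m \<ge> 2" and j: "j < m"
  shows "phi \<nu> j \<le> real m - cl ^ (2 * (m - 1) * B)"
proof -
  obtain i where i: "i < m" "i \<noteq> j" "cl ^ (2 * B) \<le> phi \<nu> i"
    using exists_other_phi_ge[OF m2 j] by blast
  have "phi \<nu> j + phi \<nu> i = (\<Sum>k\<in>{j, i}. phi \<nu> k)"
    using i(2) by simp
  also have "\<dots> \<le> (\<Sum>k<m. phi \<nu> k)"
    by (rule sum_mono2) (use i j phi_pos in \<open>auto intro: less_imp_le\<close>)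
  finally have "phi \<nu> j + phi \<nu> i \<le> real m"
    by (simp add: phi_sum)
  moreover have "cl ^ (2 * (m - 1) * B) \<le> cl ^ (2 * B)"
    using m2 cl_pos cl_le_one by (intro power_decreasing) auto
  ultimately show ?thesis
    using i(3) by linarith
qed

end

section \<open>Gradient tracking and the merit recursion\<close>

lemma norm_add_sq_le:
  fixes a b :: "'a::real_normed_vector"
  shows "(norm (a + b))\<^sup>2 \<le> 2 * (norm a)\<^sup>2 + 2 * (norm b)\<^sup>2"
proof -
  have "(norm (a + b))\<^sup>2 \<le> (norm a + norm b)\<^sup>2"
    by (simp add: norm_triangle_ineq power_mono)
  also have "\<dots> \<le> 2 * (norm a)\<^sup>2 + 2 * (norm b)\<^sup>2"
    using sum_squares_bound[of "norm a" "norm b"] by (simp add: power2_eq_square algebra_simps)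
  finally show ?thesis .
qed

lemma norm_average_sq_le:
  fixes w :: "nat \<Rightarrow> 'a::real_normed_vector"
  assumes "m > 0"
  shows "(norm ((1 / real m) *\<^sub>R (\<Sum>i<m. w i)))\<^sup>2 \<le> (1 / real m) * (\<Sum>i<m. (norm (w i))\<^sup>2)"
proof -
  have "(norm ((1 / real m) *\<^sub>R (\<Sum>i<m. w i)))\<^sup>2 \<le> ((1 / real m) * (\<Sum>i<m. norm (w i)))\<^sup>2"
    using norm_sum[of w "{..<m}"] by (simp add: divide_right_mono power_mono)
  also have "\<dots> = (\<Sum>i<m. norm (w i) * 1)\<^sup>2 / (real m)\<^sup>2"
    by (simp add: power_divide)
  also have "\<dots> \<le> ((\<Sum>i<m. (norm (w i))\<^sup>2) * (\<Sum>i<m. 1\<^sup>2)) / (real m)\<^sup>2"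
    by (intro divide_right_mono Cauchy_Schwarz_ineq_sum) simp
  also have "\<dots> = (1 / real m) * (\<Sum>i<m. (norm (w i))\<^sup>2)"
    using assms by (simp add: power2_eq_square)
  finally show ?thesis .
qed

lemma gradient_tracking_error_single:
  fixes gf :: "nat \<Rightarrow> 'a::real_normed_vector \<Rightarrow> 'b::real_normed_vector" and x :: "nat \<Rightarrow> 'a"
  assumes m: "m > 0" and j: "j < m"
    and lip: "\<And>i. i < m \<Longrightarrow> norm (gf i (x j) - gf i (x i)) \<le> Lm * norm (x j - x i)"
    and yb: "yb = (1 / real m) *\<^sub>R (\<Sum>i<m. gf i (x i))"
  shows "(norm ((1 / real m) *\<^sub>R (\<Sum>i<m. gf i (x j)) - yj))\<^sup>2
    \<le> 2 * (norm (yj - yb))\<^sup>2 + 4 * Lm\<^sup>2 * (norm (x j - xb))\<^sup>2 + 4 * Lm\<^sup>2 / real m * (\<Sum>i<m. (norm (x i - xb))\<^sup>2)"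
proof -
  have "(1 / real m) *\<^sub>R (\<Sum>i<m. gf i (x j)) - yj = (yb - yj) + (1 / real m) *\<^sub>R (\<Sum>i<m. gf i (x j) - gf i (x i))"
    by (simp add: yb sum_subtractf scaleR_diff_right)
  then have "(norm ((1 / real m) *\<^sub>R (\<Sum>i<m. gf i (x j)) - yj))\<^sup>2
      \<le> 2 * (norm (yb - yj))\<^sup>2 + 2 * (norm ((1 / real m) *\<^sub>R (\<Sum>i<m. gf i (x j) - gf i (x i))))\<^sup>2"
    by (simp only: norm_add_sq_le)
  also have "\<dots> = 2 * (norm (yj - yb))\<^sup>2 + 2 * (norm ((1 / real m) *\<^sub>R (\<Sum>i<m. gf i (x j) - gf i (x i))))\<^sup>2"
    by (simp only: norm_minus_commute[of yb yj])
  also have "\<dots> \<le> 2 * (norm (yj - yb))\<^sup>2 + 2 * ((1 / real m) * (\<Sum>i<m. (norm (gf i (x j) - gf i (x i)))\<^sup>2))"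
    by (intro add_left_mono mult_left_mono norm_average_sq_le[OF m]) simp
  also have "\<dots> \<le> 2 * (norm (yj - yb))\<^sup>2 + 2 * ((1 / real m) * (\<Sum>i<m. Lm\<^sup>2 * (2 * (norm (x j - xb))\<^sup>2 + 2 * (norm (x i - xb))\<^sup>2)))"
  proof -
    have "(norm (gf i (x j) - gf i (x i)))\<^sup>2 \<le> Lm\<^sup>2 * (2 * (norm (x j - xb))\<^sup>2 + 2 * (norm (x i - xb))\<^sup>2)"
      if i: "i < m" for i
    proof -
      have "(norm (gf i (x j) - gf i (x i)))\<^sup>2 \<le> (Lm * norm ((x j - xb) - (x i - xb)))\<^sup>2"
        using lip[OF i] by (simp add: power_mono)
      also have "\<dots> \<le> Lm\<^sup>2 * (2 * (norm (x j - xb))\<^sup>2 + 2 * (norm (x i - xb))\<^sup>2)"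
        using norm_add_sq_le[of "x j - xb" "xb - x i"]
        by (simp add: power_mult_distrib norm_minus_commute mult_left_mono)
      finally show ?thesis .
    qed
    then show ?thesis
      by (intro add_left_mono mult_left_mono sum_mono) auto
  qed
  also have "\<dots> = 2 * (norm (yj - yb))\<^sup>2 + 4 * Lm\<^sup>2 * (norm (x j - xb))\<^sup>2 + 4 * Lm\<^sup>2 / real m * (\<Sum>i<m. (norm (x i - xb))\<^sup>2)"
    using m by (simp add: sum.distrib sum_distrib_left field_simps)
  finally show ?thesis .
qed

lemma gradient_tracking_error:
  fixes gf :: "nat \<Rightarrow> 'a::real_normed_vector \<Rightarrow> 'b::real_normed_vector" and x :: "nat \<Rightarrow> 'a"
  assumes m: "m > 0"
    and lip: "\<And>i j. i < m \<Longrightarrow> j < m \<Longrightarrow> norm (gf i (x j) - gf i (x i)) \<le> Lm * norm (x j - x i)"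
    and yb: "yb = (1 / real m) *\<^sub>R (\<Sum>i<m. gf i (x i))"
  shows "(\<Sum>j<m. (norm ((1 / real m) *\<^sub>R (\<Sum>i<m. gf i (x j)) - y j))\<^sup>2)
     \<le> 8 * Lm\<^sup>2 * (\<Sum>i<m. (norm (x i - xb))\<^sup>2) + 2 * (\<Sum>i<m. (norm (y i - yb))\<^sup>2)"
proof -
  define X where "X = (\<Sum>i<m. (norm (x i - xb))\<^sup>2)"
  have "(\<Sum>j<m. (norm ((1 / real m) *\<^sub>R (\<Sum>i<m. gf i (x j)) - y j))\<^sup>2)
      \<le> (\<Sum>j<m. 2 * (norm (y j - yb))\<^sup>2 + 4 * Lm\<^sup>2 * (norm (x j - xb))\<^sup>2 + 4 * Lm\<^sup>2 / real m * X)"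
    unfolding X_def using gradient_tracking_error_single[OF m _ lip yb] by (intro sum_mono) auto
  also have "\<dots> = 2 * (\<Sum>j<m. (norm (y j - yb))\<^sup>2) + 4 * Lm\<^sup>2 * X + real m * (4 * Lm\<^sup>2 / real m * X)"
    by (simp add: X_def sum.distrib sum_distrib_left)
  also have "\<dots> = 8 * Lm\<^sup>2 * X + 2 * (\<Sum>j<m. (norm (y j - yb))\<^sup>2)"
    using m by simp
  finally show ?thesis
    by (simp add: X_def)
qed

locale sonata = push_sum_weights m E B C cl phi
  for m :: nat and E :: "nat \<Rightarrow> (nat \<times> nat) set" and B :: nat
    and C :: "nat \<Rightarrow> nat \<Rightarrow> nat \<Rightarrow> real" and cl :: real and phi :: "nat \<Rightarrow> nat \<Rightarrow> real" +
  fixes K Oo :: "'a::euclidean_space set"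
    and f :: "nat \<Rightarrow> 'a \<Rightarrow> real" and gf :: "nat \<Rightarrow> 'a \<Rightarrow> 'a" and Hf :: "nat \<Rightarrow> 'a \<Rightarrow> 'a \<Rightarrow> 'a"
    and F U :: "'a \<Rightarrow> real" and HF :: "'a \<Rightarrow> 'a \<Rightarrow> 'a" and Ustar :: real
    and mu :: real and Lf :: "nat \<Rightarrow> real" and G :: "'a \<Rightarrow> real"
    and ft :: "nat \<Rightarrow> 'a \<Rightarrow> 'a \<Rightarrow> real" and gft :: "nat \<Rightarrow> 'a \<Rightarrow> 'a \<Rightarrow> 'a"
    and Hft :: "nat \<Rightarrow> 'a \<Rightarrow> 'a \<Rightarrow> 'a \<Rightarrow> 'a"
    and mut Dl Du :: "nat \<Rightarrow> real" and alpha :: real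
    and x y xhat xhalf :: "nat \<Rightarrow> nat \<Rightarrow> 'a"
  assumes F_def: "F = (\<lambda>z. (1 / real m) * (\<Sum>i<m. f i z))"
    and HF_def: "HF = (\<lambda>z h. (1 / real m) *\<^sub>R (\<Sum>i<m. Hf i z h))"
    and U_def: "U = (\<lambda>z. F z + G z)"
    and Ustar_def: "Ustar = Inf (U ` K)"
    and K_convex: "convex K" and O_open: "open Oo" and KO: "K \<subseteq> Oo"
    and f_grad: "\<And>i z. i < m \<Longrightarrow> z \<in> Oo \<Longrightarrow> (f i has_derivative (\<lambda>h. gf i z \<bullet> h)) (at z)"
    and f_hess: "\<And>i z. i < m \<Longrightarrow> z \<in> Oo \<Longrightarrow> (gf i has_derivative Hf i z) (at z)"
    and f_convex: "\<And>i S. i < m \<Longrightarrow> S \<subseteq> Oo \<Longrightarrow> convex S \<Longrightarrow> convex_on S (f i)"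
    and mu_pos: "mu > 0"
    and F_hess_lower: "\<And>z h. z \<in> K \<Longrightarrow> mu * (norm h)\<^sup>2 \<le> h \<bullet> HF z h"
    and G_convex: "convex_on K G"
    and fi_hess: "\<And>i z h. i < m \<Longrightarrow> z \<in> K \<Longrightarrow> h \<bullet> Hf i z h \<le> Lf i * (norm h)\<^sup>2"
    and ft_grad: "\<And>i z w. i < m \<Longrightarrow> z \<in> Oo \<Longrightarrow> w \<in> Oo \<Longrightarrow>
                    ((\<lambda>v. ft i v w) has_derivative (\<lambda>h. gft i z w \<bullet> h)) (at z)"
    and ft_hess: "\<And>i z w. i < m \<Longrightarrow> z \<in> Oo \<Longrightarrow> w \<in> Oo \<Longrightarrow>
                    ((\<lambda>v. gft i v w) has_derivative Hft i z w) (at z)"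
    and ft_consistent: "\<And>i z. i < m \<Longrightarrow> z \<in> Oo \<Longrightarrow> gft i z z = gf i z"
    and ft_strconv: "\<And>i w. i < m \<Longrightarrow> w \<in> K \<Longrightarrow> strongly_convex_on K (\<lambda>v. ft i v w) (mut i)"
    and D_bounds: "\<And>i z w h. i < m \<Longrightarrow> z \<in> K \<Longrightarrow> w \<in> K \<Longrightarrow>
                    Dl i * (norm h)\<^sup>2 \<le> h \<bullet> (Hft i z w h - HF z h) \<and> h \<bullet> (Hft i z w h - HF z h) \<le> Du i * (norm h)\<^sup>2"
    and alpha_pos: "0 < alpha" and alpha_le1: "alpha \<le> 1"
    and x_0: "\<And>i. i < m \<Longrightarrow> x 0 i \<in> K"
    and y_0: "\<And>i. i < m \<Longrightarrow> y 0 i = gf i (x 0 i)"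
    and xhat_in: "\<And>\<nu> i. i < m \<Longrightarrow> xhat \<nu> i \<in> K"
    and xhat_min: "\<And>\<nu> i z. i < m \<Longrightarrow> z \<in> K \<Longrightarrow>
        ft i (xhat \<nu> i) (x \<nu> i) + (y \<nu> i - gf i (x \<nu> i)) \<bullet> (xhat \<nu> i - x \<nu> i) + G (xhat \<nu> i)
        \<le> ft i z (x \<nu> i) + (y \<nu> i - gf i (x \<nu> i)) \<bullet> (z - x \<nu> i) + G z"
    and xhalf_eq: "\<And>\<nu> i. i < m \<Longrightarrow> xhalf \<nu> i = x \<nu> i + alpha *\<^sub>R (xhat \<nu> i - x \<nu> i)"
    and x_Suc: "\<And>\<nu> i. i < m \<Longrightarrow>
        x (Suc \<nu>) i = (1 / phi (Suc \<nu>) i) *\<^sub>R (\<Sum>j<m. (C \<nu> i j * phi \<nu> j) *\<^sub>R xhalf \<nu> j)"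
    and y_Suc: "\<And>\<nu> i. i < m \<Longrightarrow>
        y (Suc \<nu>) i = (1 / phi (Suc \<nu>) i) *\<^sub>R
          (\<Sum>j<m. C \<nu> i j *\<^sub>R (phi \<nu> j *\<^sub>R y \<nu> j + gf j (x (Suc \<nu>) j) - gf j (x \<nu> j)))"
begin

definition gF :: "'a \<Rightarrow> 'a" where
  "gF z = (1 / real m) *\<^sub>R (\<Sum>i<m. gf i z)"

definition merit :: "nat \<Rightarrow> real" where
  "merit \<nu> = (\<Sum>i<m. phi \<nu> i * (U (x \<nu> i) - Ustar))"

definition consensus_error :: "(nat \<Rightarrow> nat \<Rightarrow> 'a) \<Rightarrow> nat \<Rightarrow> real" where
  "consensus_error z \<nu> = (\<Sum>i<m. (norm (z \<nu> i - (1 / real m) *\<^sub>R (\<Sum>j<m. phi \<nu> j *\<^sub>R z \<nu> j)))\<^sup>2)"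

lemma F_grad: "u \<in> Oo \<Longrightarrow> (F has_derivative (\<lambda>h. gF u \<bullet> h)) (at u)"
  unfolding F_def gF_def inner_scaleR_left inner_sum_left
  by (intro has_derivative_mult_right has_derivative_sum f_grad) auto

lemma F_hess: "u \<in> Oo \<Longrightarrow> (gF has_derivative HF u) (at u)"
  unfolding HF_def gF_def[abs_def]
  by (intro has_derivative_scaleR_right has_derivative_sum f_hess) auto

lemma F_convex: "convex_on K F"
  unfolding F_def
  by (intro convex_on_cmul convex_on_sum_fun K_convex f_convex KO) auto

lemma U_convex: "convex_on K U"
  unfolding U_def using convex_on_add[OF F_convex G_convex] .

lemma xhalf_in:
  assumes "j < m" "x \<nu> j \<in> K"
  shows "xhalf \<nu> j \<in> K"
proof -
  have "xhalf \<nu> j = (1 - alpha) *\<^sub>R x \<nu> j + alpha *\<^sub>R xhat \<nu> j"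
    using xhalf_eq[OF assms(1)] by (simp add: algebra_simps)
  then show ?thesis
    using convexD[OF K_convex assms(2) xhat_in[OF assms(1)], of "1 - alpha" alpha] alpha_pos alpha_le1
    by simp
qed

lemma x_Suc_convex_combination:
  assumes "i < m"
  shows "x (Suc \<nu>) i = (\<Sum>j<m. (C \<nu> i j * phi \<nu> j / phi (Suc \<nu>) i) *\<^sub>R xhalf \<nu> j)"
    and "(\<Sum>j<m. C \<nu> i j * phi \<nu> j / phi (Suc \<nu>) i) = 1"
    and "j < m \<Longrightarrow> 0 \<le> C \<nu> i j * phi \<nu> j / phi (Suc \<nu>) i"
  using assms phi_Suc[OF assms] phi_pos[OF assms, of "Suc \<nu>"] phi_pos[of j \<nu>] C_nonneg[OF assms, of j \<nu>]
  by (simp_all add: x_Suc scaleR_sum_right sum_divide_distrib[symmetric])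

lemma x_in: "i < m \<Longrightarrow> x \<nu> i \<in> K"
proof (induction \<nu> arbitrary: i)
  case 0
  then show ?case
    by (rule x_0)
next
  case (Suc \<nu>)
  show ?case
    unfolding x_Suc_convex_combination(1)[OF Suc.prems]
    by (rule convex_sum[OF _ K_convex x_Suc_convex_combination(2)[OF Suc.prems]])
      (use x_Suc_convex_combination(3)[OF Suc.prems] xhalf_in Suc.IH in auto)
qed

lemma tracking: "(\<Sum>i<m. phi \<nu> i *\<^sub>R y \<nu> i) = (\<Sum>i<m. gf i (x \<nu> i))"
proof (induction \<nu>)
  case 0
  then show ?case
    by (simp add: phi_0 y_0)
next
  case (Suc \<nu>)
  have "(\<Sum>i<m. phi (Suc \<nu>) i *\<^sub>R y (Suc \<nu>) i)
      = (\<Sum>i<m. \<Sum>j<m. C \<nu> i j *\<^sub>R (phi \<nu> j *\<^sub>R y \<nu> j + gf j (x (Suc \<nu>) j) - gf j (x \<nu> j)))"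
    using phi_pos by (intro sum.cong) (simp_all add: y_Suc less_imp_neq[symmetric])
  also have "\<dots> = (\<Sum>j<m. phi \<nu> j *\<^sub>R y \<nu> j + gf j (x (Suc \<nu>) j) - gf j (x \<nu> j))"
    by (rule column_stochastic_sum)
  also have "\<dots> = (\<Sum>i<m. gf i (x (Suc \<nu>) i))"
    using Suc.IH by (simp add: sum.distrib sum_subtractf)
  finally show ?case .
qed

lemma gf_lipschitz:
  assumes "i < m" "a \<in> K" "b \<in> K"
  shows "norm (gf i b - gf i a) \<le> Lf i * norm (b - a)"
proof (rule gradient_lipschitz_of_hessian_bound[OF O_open K_convex KO f_grad[OF assms(1)] f_hess[OF assms(1)] _ assms(2,3)])
  fix z h assume z: "z \<in> K"
  obtain r where r: "r > 0" "ball z r \<subseteq> Oo"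
    using z KO O_open openE by blast
  have "0 \<le> Hf i z h \<bullet> h"
    using z r f_convex[OF assms(1) r(2)] f_grad[OF assms(1)] f_hess[OF assms(1)] KO
    by (intro convex_hessian_nonneg[where T = "ball z r" and f = "f i" and gr = "gf i"]) auto
  with fi_hess[OF assms(1) z, of h] show "\<bar>Hf i z h \<bullet> h\<bar> \<le> Lf i * (norm h)\<^sup>2"
    by (simp add: inner_commute)
qed

lemma surrogate_step_agent:
  fixes \<nu> :: nat
  assumes j: "j < m" and D: "\<bar>Dl j\<bar> \<le> D" "\<bar>Du j\<bar> \<le> D"
  defines "w \<equiv> x \<nu> j" and "c \<equiv> y \<nu> j - gf j (x \<nu> j)"
  shows "surrogate_step K Oo F G (\<lambda>v. ft j v w + c \<bullet> (v - w)) gF (\<lambda>v. gft j v w + c)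
    HF (\<lambda>v. Hft j v w) mu (mut j) (Dl j) D w (xhat \<nu> j) (y \<nu> j)"
proof
  have w: "w \<in> K" "w \<in> Oo"
    using x_in[OF j] KO by (auto simp: w_def)
  show "((\<lambda>v. ft j v w + c \<bullet> (v - w)) has_derivative (\<lambda>h. (gft j u w + c) \<bullet> h)) (at u)"
    if "u \<in> Oo" for u
    using ft_grad[OF j that w(2)] by (auto intro!: derivative_eq_intros simp: inner_add_left)
  show "((\<lambda>v. gft j v w + c) has_derivative Hft j u w) (at u)" if "u \<in> Oo" for u
    using has_derivative_add_const[OF ft_hess[OF j that w(2)]] by simp
  show "mu * (norm h)\<^sup>2 \<le> HF z h \<bullet> h" if "z \<in> K" for z h
    using F_hess_lower[OF that] by (simp add: inner_commute)
  show "Dl j * (norm h)\<^sup>2 \<le> (Hft j z w h - HF z h) \<bullet> h" if "z \<in> K" for z h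
    using D_bounds[OF j that w(1)] by (simp add: inner_commute)
  show "\<bar>(Hft j z w h - HF z h) \<bullet> h\<bar> \<le> D * (norm h)\<^sup>2" if "z \<in> K" for z h
  proof -
    have "\<bar>Dl j * (norm h)\<^sup>2\<bar> \<le> D * (norm h)\<^sup>2" "\<bar>Du j * (norm h)\<^sup>2\<bar> \<le> D * (norm h)\<^sup>2"
      using D by (simp_all add: abs_mult mult_right_mono)
    with D_bounds[OF j that w(1), of h] show ?thesis
      by (simp add: inner_commute abs_le_iff)
  qed
  show "strongly_convex_on K (\<lambda>v. ft j v w + c \<bullet> (v - w)) (mut j)"
    by (rule strongly_convex_on_add_affine[OF ft_strconv[OF j w(1)]])
  show "ft j (xhat \<nu> j) w + c \<bullet> (xhat \<nu> j - w) + G (xhat \<nu> j) \<le> ft j z w + c \<bullet> (z - w) + G z"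
    if "z \<in> K" for z
    using xhat_min[OF j that] by (simp add: w_def c_def)
  show "gft j w w + c = y \<nu> j"
    using ft_consistent[OF j w(2)] by (simp add: c_def w_def)
qed (use O_open K_convex KO x_in[OF j] xhat_in[OF j] F_grad F_hess F_convex G_convex mu_pos
  in \<open>auto simp: w_def\<close>)

lemma local_step:
  assumes j: "j < m" and D: "\<bar>Dl j\<bar> \<le> D" "\<bar>Du j\<bar> \<le> D" and eps: "eps > 0" and a: "a > 0"
    and coef: "a + eps / 2 \<le> (1 - alpha / 2) * mut j + Dl j / 2 * alpha"
  shows "U (xhalf \<nu> j) - Ustar
    \<le> (1 - alpha * (a / (D\<^sup>2 / mu + a))) * (U (x \<nu> j) - Ustar)
       + ((alpha / (2 * eps) * (D\<^sup>2 / mu) + alpha / mu * a) / (D\<^sup>2 / mu + a)) * (norm (gF (x \<nu> j) - y \<nu> j))\<^sup>2"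
proof -
  interpret surrogate_step K Oo F G "\<lambda>v. ft j v (x \<nu> j) + (y \<nu> j - gf j (x \<nu> j)) \<bullet> (v - x \<nu> j)"
    gF "\<lambda>v. gft j v (x \<nu> j) + (y \<nu> j - gf j (x \<nu> j))" HF "\<lambda>v. Hft j v (x \<nu> j)"
    mu "mut j" "Dl j" D "x \<nu> j" "xhat \<nu> j" "y \<nu> j"
    by (rule surrogate_step_agent[OF j D])
  from contraction[OF alpha_pos alpha_le1 eps a coef]
  show ?thesis
    by (simp add: U_def Ustar_def xhalf_eq[OF j])
qed

lemma merit_mixing:
  "merit (Suc \<nu>) \<le> (\<Sum>j<m. phi \<nu> j * (U (xhalf \<nu> j) - Ustar))"
proof -
  have "phi (Suc \<nu>) i * (U (x (Suc \<nu>) i) - Ustar) \<le> (\<Sum>j<m. C \<nu> i j * (phi \<nu> j * (U (xhalf \<nu> j) - Ustar)))"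
    if i: "i < m" for i
  proof -
    have "U (x (Suc \<nu>) i) \<le> (\<Sum>j<m. (C \<nu> i j * phi \<nu> j / phi (Suc \<nu>) i) * U (xhalf \<nu> j))"
      unfolding x_Suc_convex_combination(1)[OF i]
      by (rule convex_on_sum[OF _ _ U_convex x_Suc_convex_combination(2)[OF i]])
        (use m_pos x_Suc_convex_combination(3)[OF i] xhalf_in x_in in auto)
    also have "\<dots> = (\<Sum>j<m. C \<nu> i j * phi \<nu> j * U (xhalf \<nu> j)) / phi (Suc \<nu>) i"
      by (simp add: sum_divide_distrib)
    finally have "phi (Suc \<nu>) i * U (x (Suc \<nu>) i) \<le> (\<Sum>j<m. C \<nu> i j * phi \<nu> j * U (xhalf \<nu> j))"
      using phi_pos[OF i, of "Suc \<nu>"] by (simp add: pos_le_divide_eq mult.commute)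
    moreover have "phi (Suc \<nu>) i * Ustar = (\<Sum>j<m. C \<nu> i j * phi \<nu> j * Ustar)"
      by (simp add: phi_Suc[OF i] sum_distrib_right)
    ultimately show ?thesis
      by (simp add: sum_subtractf algebra_simps)
  qed
  then have "merit (Suc \<nu>) \<le> (\<Sum>i<m. \<Sum>j<m. C \<nu> i j * (phi \<nu> j * (U (xhalf \<nu> j) - Ustar)))"
    unfolding merit_def by (intro sum_mono) auto
  also have "\<dots> = (\<Sum>j<m. phi \<nu> j * (U (xhalf \<nu> j) - Ustar))"
    using column_stochastic_sum[of \<nu> "\<lambda>j. phi \<nu> j * (U (xhalf \<nu> j) - Ustar)"] by simp
  finally show ?thesis .
qed

lemma tracking_error_sum:
  assumes Lf: "\<And>i. i < m \<Longrightarrow> Lf i \<le> Lm"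
  shows "(\<Sum>j<m. (norm (gF (x \<nu> j) - y \<nu> j))\<^sup>2) \<le> 8 * Lm\<^sup>2 * consensus_error x \<nu> + 2 * consensus_error y \<nu>"
  unfolding consensus_error_def gF_def
proof (rule gradient_tracking_error[OF m_pos])
  fix i j assume ij: "i < m" "j < m"
  have "norm (gf i (x \<nu> j) - gf i (x \<nu> i)) \<le> Lf i * norm (x \<nu> j - x \<nu> i)"
    by (rule gf_lipschitz[OF ij(1) x_in[OF ij(1)] x_in[OF ij(2)]])
  also have "\<dots> \<le> Lm * norm (x \<nu> j - x \<nu> i)"
    using Lf[OF ij(1)] by (intro mult_right_mono) auto
  finally show "norm (gf i (x \<nu> j) - gf i (x \<nu> i)) \<le> Lm * norm (x \<nu> j - x \<nu> i)" .
qed (simp add: tracking)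

lemma weighted_tracking_error:
  assumes Lf: "\<And>i. i < m \<Longrightarrow> Lf i \<le> Lm"
  shows "(\<Sum>j<m. phi \<nu> j * (norm (gF (x \<nu> j) - y \<nu> j))\<^sup>2)
    \<le> (real m - cl ^ (2 * (m - 1) * B)) * (8 * Lm\<^sup>2 * consensus_error x \<nu> + 2 * consensus_error y \<nu>)"
proof (cases "m = 1")
  case True
  (* Here the weight bound reads 1 \<le> 0, but the tracking error itself vanishes. *)
  then have m1: "{..<m} = {0}"
    by auto
  have "phi \<nu> 0 = 1" "phi \<nu> 0 *\<^sub>R y \<nu> 0 = gf 0 (x \<nu> 0)"
    using phi_sum[of \<nu>] tracking[of \<nu>] True by (simp_all add: m1)
  then have "gF (x \<nu> 0) = y \<nu> 0"
    unfolding gF_def m1 using True by simp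
  then show ?thesis
    unfolding m1 using True by simp
next
  case False
  then have m2: "m \<ge> 2"
    using m_pos by simp
  have "(\<Sum>j<m. phi \<nu> j * (norm (gF (x \<nu> j) - y \<nu> j))\<^sup>2)
      \<le> (\<Sum>j<m. (real m - cl ^ (2 * (m - 1) * B)) * (norm (gF (x \<nu> j) - y \<nu> j))\<^sup>2)"
    using phi_le[OF m2] by (intro sum_mono mult_right_mono) auto
  also have "\<dots> = (real m - cl ^ (2 * (m - 1) * B)) * (\<Sum>j<m. (norm (gF (x \<nu> j) - y \<nu> j))\<^sup>2)"
    by (simp add: sum_distrib_left)
  also have "\<dots> \<le> (real m - cl ^ (2 * (m - 1) * B)) * (8 * Lm\<^sup>2 * consensus_error x \<nu> + 2 * consensus_error y \<nu>)"
    using tracking_error_sum[OF Lf] phi_le[OF m2 m_pos, of \<nu>] phi_pos[OF m_pos, of \<nu>]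
    by (intro mult_left_mono) auto
  finally show ?thesis .
qed

theorem merit_recursion:
  fixes sigma eta :: real
  assumes D: "\<And>j. j < m \<Longrightarrow> \<bar>Dl j\<bar> \<le> D \<and> \<bar>Du j\<bar> \<le> D"
    and eps: "eps > 0" and a: "a > 0"
    and coef: "\<And>j. j < m \<Longrightarrow> a + eps / 2 \<le> (1 - alpha / 2) * mut j + Dl j / 2 * alpha"
    and Lf: "\<And>i. i < m \<Longrightarrow> Lf i \<le> Lm"
  defines "sigma \<equiv> 1 - alpha * (a / (D\<^sup>2 / mu + a))"
    and "eta \<equiv> (alpha / (2 * eps) * (D\<^sup>2 / mu) + alpha / mu * a) / (D\<^sup>2 / mu + a)"
  shows "merit (Suc \<nu>) \<le> sigma * merit \<nu>
    + eta * (real m - cl ^ (2 * (m - 1) * B)) * (8 * Lm\<^sup>2 * consensus_error x \<nu> + 2 * consensus_error y \<nu>)"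
proof -
  have "D\<^sup>2 / mu + a > 0"
    using mu_pos a by (simp add: add_nonneg_pos)
  then have eta: "eta \<ge> 0"
    unfolding eta_def using alpha_pos eps mu_pos a by (intro divide_nonneg_pos add_nonneg_nonneg) auto
  have "merit (Suc \<nu>) \<le> (\<Sum>j<m. phi \<nu> j * (U (xhalf \<nu> j) - Ustar))"
    by (rule merit_mixing)
  also have "\<dots> \<le> (\<Sum>j<m. phi \<nu> j * (sigma * (U (x \<nu> j) - Ustar) + eta * (norm (gF (x \<nu> j) - y \<nu> j))\<^sup>2))"
  proof (rule sum_mono)
    fix j assume "j \<in> {..<m}"
    then have j: "j < m"
      by simp
    show "phi \<nu> j * (U (xhalf \<nu> j) - Ustar)
        \<le> phi \<nu> j * (sigma * (U (x \<nu> j) - Ustar) + eta * (norm (gF (x \<nu> j) - y \<nu> j))\<^sup>2)"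
      using local_step[OF j _ _ eps a coef[OF j], of D \<nu>] D[OF j] phi_pos[OF j, of \<nu>]
      unfolding sigma_def eta_def by (intro mult_left_mono) auto
  qed
  also have "\<dots> = (\<Sum>j<m. sigma * (phi \<nu> j * (U (x \<nu> j) - Ustar)) + eta * (phi \<nu> j * (norm (gF (x \<nu> j) - y \<nu> j))\<^sup>2))"
    by (simp add: algebra_simps)
  also have "\<dots> = sigma * merit \<nu> + eta * (\<Sum>j<m. phi \<nu> j * (norm (gF (x \<nu> j) - y \<nu> j))\<^sup>2)"
    by (simp add: merit_def sum.distrib sum_distrib_left)
  also have "\<dots> \<le> sigma * merit \<nu>
      + eta * ((real m - cl ^ (2 * (m - 1) * B)) * (8 * Lm\<^sup>2 * consensus_error x \<nu> + 2 * consensus_error y \<nu>))"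
    using weighted_tracking_error[OF Lf] eta by (intro add_left_mono mult_left_mono)
  finally show ?thesis
    by (simp add: mult.assoc)
qed

end

theorem proposition4p1:
  fixes m :: nat and K Oo :: "'a::euclidean_space set"
    and f :: "nat \<Rightarrow> 'a \<Rightarrow> real" and gf :: "nat \<Rightarrow> 'a \<Rightarrow> 'a" and Hf :: "nat \<Rightarrow> 'a \<Rightarrow> 'a \<Rightarrow> 'a"
    and mu L :: real and Lf :: "nat \<Rightarrow> real" and G :: "'a \<Rightarrow> real"
    and E :: "nat \<Rightarrow> (nat \<times> nat) set" and B :: nat
    and C :: "nat \<Rightarrow> nat \<Rightarrow> nat \<Rightarrow> real" and cl :: real
    and ft :: "nat \<Rightarrow> 'a \<Rightarrow> 'a \<Rightarrow> real" and gft :: "nat \<Rightarrow> 'a \<Rightarrow> 'a \<Rightarrow> 'a"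
    and Hft :: "nat \<Rightarrow> 'a \<Rightarrow> 'a \<Rightarrow> 'a \<Rightarrow> 'a"
    and Lt mut Dl Du :: "nat \<Rightarrow> real"
    and alpha eps :: real
    and x y xhat xhalf :: "nat \<Rightarrow> nat \<Rightarrow> 'a" and phi :: "nat \<Rightarrow> nat \<Rightarrow> real"
    and F U :: "'a \<Rightarrow> real" and HF :: "'a \<Rightarrow> 'a \<Rightarrow> 'a"
    and Ustar Lmax Dmax mutmin Dlmin a sigma eta phiub :: real
    and Dv :: "nat \<Rightarrow> real" and p :: "nat \<Rightarrow> real" and xperp2 yperp2 :: "nat \<Rightarrow> real"
  defines "F \<equiv> (\<lambda>z. (1 / real m) * (\<Sum>i<m. f i z))"
    and "HF \<equiv> (\<lambda>z h. (1 / real m) *\<^sub>R (\<Sum>i<m. Hf i z h))"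
    and "U \<equiv> (\<lambda>z. F z + G z)"
    and "Ustar \<equiv> Inf (U ` K)"
    and "Lmax \<equiv> Max (Lf ` {..<m})"
    and "Dv \<equiv> (\<lambda>i. max \<bar>Dl i\<bar> \<bar>Du i\<bar>)"
    and "mutmin \<equiv> Min (mut ` {..<m})"
    and "Dlmin \<equiv> Min (Dl ` {..<m})"
    and "Dmax \<equiv> Max (Dv ` {..<m})"
    and "a \<equiv> (1 - alpha / 2) * mutmin + Dlmin / 2 * alpha - eps / 2"
    and "sigma \<equiv> 1 - alpha * (a / (Dmax\<^sup>2 / mu + a))"
    and "eta \<equiv> (alpha / (2 * eps) * (Dmax\<^sup>2 / mu) + alpha / mu * a) / (Dmax\<^sup>2 / mu + a)"
    and "phiub \<equiv> real m - cl ^ (2 * (m - 1) * B)"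
    and "p \<equiv> (\<lambda>\<nu>. \<Sum>i<m. phi \<nu> i * (U (x \<nu> i) - Ustar))"
    and "xperp2 \<equiv> (\<lambda>\<nu>. \<Sum>i<m. (norm (x \<nu> i - (1 / real m) *\<^sub>R (\<Sum>j<m. phi \<nu> j *\<^sub>R x \<nu> j)))\<^sup>2)"
    and "yperp2 \<equiv> (\<lambda>\<nu>. \<Sum>i<m. (norm (y \<nu> i - (1 / real m) *\<^sub>R (\<Sum>j<m. phi \<nu> j *\<^sub>R y \<nu> j)))\<^sup>2)"
  assumes m_pos: "m > 0"
    \<comment> \<open>Assumption (A)\<close>
    and K_ne: "K \<noteq> {}" and K_closed: "closed K" and K_convex: "convex K"
    and O_open: "open Oo" and KO: "K \<subseteq> Oo"
    and f_grad: "\<And>i z. i < m \<Longrightarrow> z \<in> Oo \<Longrightarrow> (f i has_derivative (\<lambda>h. gf i z \<bullet> h)) (at z)"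
    and f_hess: "\<And>i z. i < m \<Longrightarrow> z \<in> Oo \<Longrightarrow> (gf i has_derivative Hf i z) (at z)"
    and f_convex: "\<And>i S. i < m \<Longrightarrow> S \<subseteq> Oo \<Longrightarrow> convex S \<Longrightarrow> convex_on S (f i)"
    and mu_pos: "mu > 0"
    and F_hess: "\<And>z h. z \<in> K \<Longrightarrow> mu * (norm h)\<^sup>2 \<le> h \<bullet> HF z h \<and> h \<bullet> HF z h \<le> L * (norm h)\<^sup>2"
    and G_convex: "convex_on K G"
    and fi_hess: "\<And>i z h. i < m \<Longrightarrow> z \<in> K \<Longrightarrow> h \<bullet> Hf i z h \<le> Lf i * (norm h)\<^sup>2"
    \<comment> \<open>Assumption (B')\<close>
    and E_vert: "\<And>\<nu>. E \<nu> \<subseteq> {..<m} \<times> {..<m}"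
    and B_pos: "B > 0"
    and B_conn: "\<And>\<nu>. strongly_connected_dg m (\<Union>t\<in>{\<nu> * B ..< (\<nu> + 1) * B}. E t)"
    \<comment> \<open>Assumption (E)\<close>
    and cl_pos: "cl > 0"
    and C_diag: "\<And>\<nu> i. i < m \<Longrightarrow> C \<nu> i i \<ge> cl"
    and C_edge: "\<And>\<nu> i j. i < m \<Longrightarrow> j < m \<Longrightarrow> (j, i) \<in> E \<nu> \<Longrightarrow> C \<nu> i j \<ge> cl"
    and C_zero: "\<And>\<nu> i j. i < m \<Longrightarrow> j < m \<Longrightarrow> i \<noteq> j \<Longrightarrow> (j, i) \<notin> E \<nu> \<Longrightarrow> C \<nu> i j = 0"
    and C_colstoch: "\<And>\<nu> j. j < m \<Longrightarrow> (\<Sum>i<m. C \<nu> i j) = 1"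
    \<comment> \<open>Assumption (C)\<close>
    and ft_C2: "\<And>i. i < m \<Longrightarrow> C2_on (Oo \<times> Oo) (\<lambda>q. ft i (fst q) (snd q))"
    and ft_grad: "\<And>i z w. i < m \<Longrightarrow> z \<in> Oo \<Longrightarrow> w \<in> Oo \<Longrightarrow>
                    ((\<lambda>v. ft i v w) has_derivative (\<lambda>h. gft i z w \<bullet> h)) (at z)"
    and ft_hess: "\<And>i z w. i < m \<Longrightarrow> z \<in> Oo \<Longrightarrow> w \<in> Oo \<Longrightarrow>
                    ((\<lambda>v. gft i v w) has_derivative Hft i z w) (at z)"
    and ft_consistent: "\<And>i z. i < m \<Longrightarrow> z \<in> Oo \<Longrightarrow> gft i z z = gf i z"
    and ft_lipschitz: "\<And>i w z1 z2. i < m \<Longrightarrow> w \<in> K \<Longrightarrow> z1 \<in> K \<Longrightarrow> z2 \<in> K \<Longrightarrow>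
                    norm (gft i z1 w - gft i z2 w) \<le> Lt i * norm (z1 - z2)"
    and mut_pos: "\<And>i. i < m \<Longrightarrow> mut i > 0"
    and ft_strconv: "\<And>i w. i < m \<Longrightarrow> w \<in> K \<Longrightarrow> strongly_convex_on K (\<lambda>v. ft i v w) (mut i)"
    and D_le: "\<And>i. i < m \<Longrightarrow> Dl i \<le> Du i"
    and D_bounds: "\<And>i z w h. i < m \<Longrightarrow> z \<in> K \<Longrightarrow> w \<in> K \<Longrightarrow>
                    Dl i * (norm h)\<^sup>2 \<le> h \<bullet> (Hft i z w h - HF z h) \<and> h \<bullet> (Hft i z w h - HF z h) \<le> Du i * (norm h)\<^sup>2"
    \<comment> \<open>Step size and epsilon\<close>
    and alpha_pos: "0 < alpha" and alpha_le1: "alpha \<le> 1"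
    and eps_pos: "eps > 0" and a_pos: "a > 0"
    \<comment> \<open>SONATA iterates\<close>
    and x0: "\<And>i. i < m \<Longrightarrow> x 0 i \<in> K"
    and y0: "\<And>i. i < m \<Longrightarrow> y 0 i = gf i (x 0 i)"
    and phi0: "\<And>i. i < m \<Longrightarrow> phi 0 i = 1"
    and xhat_in: "\<And>\<nu> i. i < m \<Longrightarrow> xhat \<nu> i \<in> K"
    and xhat_min: "\<And>\<nu> i z. i < m \<Longrightarrow> z \<in> K \<Longrightarrow>
        ft i (xhat \<nu> i) (x \<nu> i) + (y \<nu> i - gf i (x \<nu> i)) \<bullet> (xhat \<nu> i - x \<nu> i) + G (xhat \<nu> i)
        \<le> ft i z (x \<nu> i) + (y \<nu> i - gf i (x \<nu> i)) \<bullet> (z - x \<nu> i) + G z"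
    and xhalf_def: "\<And>\<nu> i. i < m \<Longrightarrow> xhalf \<nu> i = x \<nu> i + alpha *\<^sub>R (xhat \<nu> i - x \<nu> i)"
    and phi_step: "\<And>\<nu> i. i < m \<Longrightarrow> phi (Suc \<nu>) i = (\<Sum>j<m. C \<nu> i j * phi \<nu> j)"
    and x_step: "\<And>\<nu> i. i < m \<Longrightarrow>
        x (Suc \<nu>) i = (1 / phi (Suc \<nu>) i) *\<^sub>R (\<Sum>j<m. (C \<nu> i j * phi \<nu> j) *\<^sub>R xhalf \<nu> j)"
    and y_step: "\<And>\<nu> i. i < m \<Longrightarrow>
        y (Suc \<nu>) i = (1 / phi (Suc \<nu>) i) *\<^sub>R
          (\<Sum>j<m. C \<nu> i j *\<^sub>R (phi \<nu> j *\<^sub>R y \<nu> j + gf j (x (Suc \<nu>) j) - gf j (x \<nu> j)))"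
  shows "\<forall>\<nu>. p (Suc \<nu>) \<le> sigma * p \<nu> + eta * phiub * (8 * Lmax\<^sup>2 * xperp2 \<nu> + 2 * yperp2 \<nu>)"
proof -
  note F_def = assms(1) and HF_def = assms(2) and U_def = assms(3) and Ustar_def = assms(4)
    and Lmax_def = assms(5) and Dv_def = assms(6) and mutmin_def = assms(7) and Dlmin_def = assms(8)
    and Dmax_def = assms(9) and a_def = assms(10) and sigma_def = assms(11) and eta_def = assms(12)
    and phiub_def = assms(13) and p_def = assms(14) and xperp2_def = assms(15) and yperp2_def = assms(16)
  interpret sonata m E B C cl phi K Oo f gf Hf F U HF Ustar mu Lf G ft gft Hft mut Dl Du alpha x y xhat xhalf
    by (unfold_locales; (fact assms(17-) F_hess[THEN conjunct1] | simp only: F_def HF_def U_def Ustar_def))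
  have D: "\<bar>Dl j\<bar> \<le> Dmax \<and> \<bar>Du j\<bar> \<le> Dmax" if "j < m" for j
    using Max_ge[of "Dv ` {..<m}" "Dv j"] that unfolding Dmax_def Dv_def by auto
  have coef: "a + eps / 2 \<le> (1 - alpha / 2) * mut j + Dl j / 2 * alpha" if "j < m" for j
  proof -
    have "(1 - alpha / 2) * mutmin \<le> (1 - alpha / 2) * mut j"
      using that alpha_le1 unfolding mutmin_def by (intro mult_left_mono Min_le) auto
    moreover have "Dlmin / 2 * alpha \<le> Dl j / 2 * alpha"
      using that alpha_pos unfolding Dlmin_def by (intro mult_right_mono divide_right_mono Min_le) auto
    ultimately show ?thesis
      unfolding a_def by linarith
  qed
  have Lf: "Lf i \<le> Lmax" if "i < m" for i
    using that unfolding Lmax_def by (auto intro: Max_ge)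
  have "p = merit" "xperp2 = consensus_error x" "yperp2 = consensus_error y"
    by (simp_all only: p_def xperp2_def yperp2_def merit_def[abs_def] consensus_error_def[abs_def])
  then show ?thesis
    unfolding sigma_def eta_def phiub_def using merit_recursion[OF D eps_pos a_pos coef Lf] by simp
qed

end
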